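(* Let $\mathcal{P}$ be a grid polyomino, $I_{\mathcal{P}}$ its polyomino ideal and $J_{\mathcal{P}}$ its toric ideal. Then $I_{\mathcal{P}}=J_{\mathcal{P}}$.
   Context: A cell is $[a,a+(1,1)]$, $a\in\mathbb{N}^2$, with vertices $a,a+(1,0),a+(0,1),a+(1,1)$; a polyomino is a finite nonempty set of cells, any two joined by a sequence of cells in it with consecutive ones sharing an edge; $V(\mathcal{P})$ is the set of vertices of its cells; $S=\mathbb{K}[x_v\mid v\in V(\mathcal{P})]$, $\mathbb{K}$ a field. For $a\le b$ componentwise, $[a,b]=\{(p,q): a_1\le p\le b_1, a_2\le q\le b_2\}$; if $a_1<b_1$, $a_2<b_2$ it has diagonal corners $a,b$ and anti-diagonal corners $c=(a_1,b_2)$, $d=(b_1,a_2)$, and is an inner interval of $\mathcal{P}$ if all its cells lie in $\mathcal{P}$. $I_{\mathcal{P}}$ is generated by all $x_ax_b-x_cx_d$ for inner intervals $[a,b]$. Grid polyomino: let $m,n\ge1$, $r,s\ge1$, and for $i\in[r]$, $j\in[s]$ let $a_{ij},b_{ij}\in\mathbb{N}^2$ with $1<(a_{ij})_1<(b_{ij})_1<m$, $1<(a_{ij})_2<(b_{ij})_2<n$, such that (1) for each $i$, $(a_{i\ell})_1=(a_{ik})_1$ and $(b_{i\ell})_1=(b_{ik})_1$ for all $\ell,k\in[s]$; (2) for each $j$, $(a_{\ell j})_2=(a_{kj})_2$ and $(b_{\ell j})_2=(b_{kj})_2$ for all $\ell,k\in[r]$; (3) $(a_{i+1,j})_1=(b_{ij})_1+1$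 for $i\in[r-1]$ and $(a_{i,j+1})_2=(b_{ij})_2+1$ for $j\in[s-1]$. The grid polyomino $\mathcal{P}$ is the set of cells of $[(1,1),(m,n)]$ not contained in any $[a_{ij},b_{ij}]$; its holes are the sets of cells of the $[a_{ij},b_{ij}]$, with lower left corners $a_{ij}$. Toric ideal: $\mathcal{F}_{i,j}=\{(x,y)\in V(\mathcal{P}): x\le(a_{ij})_1,\ y\le(a_{ij})_2\}$. A horizontal edge interval is a set $\{(t,y):p\le t\le q\}$ with each $\{(t,y),(t+1,y)\}$, $p\le t<q$, an edge of a cell of $\mathcal{P}$; maximal if not strictly contained in another; vertical analogously. Each $a\in V(\mathcal{P})$ lies in a unique maximal horizontal edge interval $H(a)$ and maximal vertical one $V(a)$. With variables $h_H,v_V$ for maximal edge intervals and $w_{i,j}$, define $\varphi:S\to\mathbb{K}[h_H,v_V,w_{i,j}]$, $\varphi(x_a)=h_{H(a)}v_{V(a)}\prod_{(i,j):a\in\mathcal{F}_{i,j}}w_{i,j}$; $J_{\mathcal{P}}=\ker\varphi$. *)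

theory Defs
  imports Main "HOL-Library.Poly_Mapping"
begin

(* Points and cells are elements of nat x nat; a cell is identified with its lower-left corner. *)

type_synonym pt = "nat \<times> nat"

type_synonym ('v, 'k) mpoly = "('v \<Rightarrow>\<^sub>0 nat) \<Rightarrow>\<^sub>0 'k"

definition Var :: "'v \<Rightarrow> ('v, 'k::comm_ring_1) mpoly" where
  "Var v = Poly_Mapping.single (Poly_Mapping.single v 1) 1"

definition poly_ring :: "'v set \<Rightarrow> ('v, 'k::comm_ring_1) mpoly set" where
  "poly_ring X = {p::(_,_) mpoly. \<forall>m \<in> Poly_Mapping.keys p. Poly_Mapping.keys m \<subseteq> X}"

definition ideal_gen :: "('v, 'k::comm_ring_1) mpoly set \<Rightarrow> ('v, 'k) mpoly set \<Rightarrow> ('v, 'k) mpoly set" where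
  "ideal_gen R G = {p. \<exists>F c. finite F \<and> F \<subseteq> G \<and> (\<forall>g\<in>F. c g \<in> R) \<and> p = (\<Sum>g\<in>F. c g * g)}"

definition subst_hom :: "('v \<Rightarrow> ('w, 'k::comm_ring_1) mpoly) \<Rightarrow> ('v, 'k) mpoly \<Rightarrow> ('w, 'k) mpoly" where
  "subst_hom f p = (\<Sum>m\<in>Poly_Mapping.keys p. Poly_Mapping.single 0 (Poly_Mapping.lookup p m) * (\<Prod>v\<in>Poly_Mapping.keys m. f v ^ Poly_Mapping.lookup m v))"

definition cell_in :: "pt \<Rightarrow> pt \<Rightarrow> pt \<Rightarrow> bool" where
  "cell_in c a b \<longleftrightarrow> fst a \<le> fst c \<and> fst c + 1 \<le> fst b \<and> snd a \<le> snd c \<and> snd c + 1 \<le> snd b"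

definition vertices :: "pt set \<Rightarrow> pt set" where
  "vertices P = {(fst c + dx, snd c + dy) | c dx dy. c \<in> P \<and> dx \<le> 1 \<and> dy \<le> 1}"

definition inner_interval :: "pt set \<Rightarrow> pt \<Rightarrow> pt \<Rightarrow> bool" where
  "inner_interval P a b \<longleftrightarrow> fst a < fst b \<and> snd a < snd b \<and> (\<forall>c. cell_in c a b \<longrightarrow> c \<in> P)"

definition polyomino_ideal :: "pt set \<Rightarrow> (pt, 'k::comm_ring_1) mpoly set" where
  "polyomino_ideal P = ideal_gen (poly_ring (vertices P))
     {Var a * Var b - Var (fst a, snd b) * Var (fst b, snd a) | a b. inner_interval P a b}"

definition grid_data :: "nat \<Rightarrow> nat \<Rightarrow> nat \<Rightarrow> nat \<Rightarrow> (nat \<Rightarrow> nat \<Rightarrow> pt) \<Rightarrow> (nat \<Rightarrow> nat \<Rightarrow> pt) \<Rightarrow> bool" where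
  "grid_data m n r s a b \<longleftrightarrow> m \<ge> 1 \<and> n \<ge> 1 \<and> r \<ge> 1 \<and> s \<ge> 1 \<and>
     (\<forall>i\<in>{1..r}. \<forall>j\<in>{1..s}.
        1 < fst (a i j) \<and> fst (a i j) < fst (b i j) \<and> fst (b i j) < m \<and>
        1 < snd (a i j) \<and> snd (a i j) < snd (b i j) \<and> snd (b i j) < n) \<and>
     (\<forall>i\<in>{1..r}. \<forall>l\<in>{1..s}. \<forall>k\<in>{1..s}. fst (a i l) = fst (a i k) \<and> fst (b i l) = fst (b i k)) \<and>
     (\<forall>j\<in>{1..s}. \<forall>l\<in>{1..r}. \<forall>k\<in>{1..r}. snd (a l j) = snd (a k j) \<and> snd (b l j) = snd (b k j)) \<and>
     (\<forall>i\<in>{1..r-1}. \<forall>j\<in>{1..s}. fst (a (i+1) j) = fst (b i j) + 1) \<and>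
     (\<forall>i\<in>{1..r}. \<forall>j\<in>{1..s-1}. snd (a i (j+1)) = snd (b i j) + 1)"

definition grid_polyomino :: "nat \<Rightarrow> nat \<Rightarrow> nat \<Rightarrow> nat \<Rightarrow> (nat \<Rightarrow> nat \<Rightarrow> pt) \<Rightarrow> (nat \<Rightarrow> nat \<Rightarrow> pt) \<Rightarrow> pt set" where
  "grid_polyomino m n r s a b =
     {c. cell_in c (1,1) (m,n) \<and> \<not> (\<exists>i\<in>{1..r}. \<exists>j\<in>{1..s}. cell_in c (a i j) (b i j))}"

definition h_edge :: "pt set \<Rightarrow> pt \<Rightarrow> bool" where  (* {(t,y),(t+1,y)} is an edge of a cell of P *)
  "h_edge P p \<longleftrightarrow> p \<in> P \<or> (snd p > 0 \<and> (fst p, snd p - 1) \<in> P)"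

definition v_edge :: "pt set \<Rightarrow> pt \<Rightarrow> bool" where  (* {(x,t),(x,t+1)} is an edge of a cell of P *)
  "v_edge P p \<longleftrightarrow> p \<in> P \<or> (fst p > 0 \<and> (fst p - 1, snd p) \<in> P)"

definition h_edge_interval :: "pt set \<Rightarrow> pt set \<Rightarrow> bool" where
  "h_edge_interval P I \<longleftrightarrow> (\<exists>p q y. p < q \<and> I = {(t, y) | t. p \<le> t \<and> t \<le> q} \<and>
      (\<forall>t. p \<le> t \<and> t < q \<longrightarrow> h_edge P (t, y)))"

definition v_edge_interval :: "pt set \<Rightarrow> pt set \<Rightarrow> bool" where
  "v_edge_interval P I \<longleftrightarrow> (\<exists>p q x. p < q \<and> I = {(x, t) | t. p \<le> t \<and> t \<le> q} \<and>
      (\<forall>t. p \<le> t \<and> t < q \<longrightarrow> v_edge P (x, t)))"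

definition max_h_interval :: "pt set \<Rightarrow> pt set \<Rightarrow> bool" where
  "max_h_interval P I \<longleftrightarrow> h_edge_interval P I \<and> \<not> (\<exists>J. h_edge_interval P J \<and> I \<subset> J)"

definition max_v_interval :: "pt set \<Rightarrow> pt set \<Rightarrow> bool" where
  "max_v_interval P I \<longleftrightarrow> v_edge_interval P I \<and> \<not> (\<exists>J. v_edge_interval P J \<and> I \<subset> J)"

definition Hint :: "pt set \<Rightarrow> pt \<Rightarrow> pt set" where
  "Hint P v = (THE I. max_h_interval P I \<and> v \<in> I)"

definition Vint :: "pt set \<Rightarrow> pt \<Rightarrow> pt set" where
  "Vint P v = (THE I. max_v_interval P I \<and> v \<in> I)"

(* variables of the target ring: h_H, v_V, w_{i,j} *)
datatype tvar = Th "pt set" | Tv "pt set" | Tw nat nat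

definition Fset :: "pt set \<Rightarrow> (nat \<Rightarrow> nat \<Rightarrow> pt) \<Rightarrow> nat \<Rightarrow> nat \<Rightarrow> pt set" where
  "Fset P a i j = {v \<in> vertices P. fst v \<le> fst (a i j) \<and> snd v \<le> snd (a i j)}"

definition phi_var :: "pt set \<Rightarrow> nat \<Rightarrow> nat \<Rightarrow> (nat \<Rightarrow> nat \<Rightarrow> pt) \<Rightarrow> pt \<Rightarrow> (tvar, 'k::comm_ring_1) mpoly" where
  "phi_var P r s a v = Var (Th (Hint P v)) * Var (Tv (Vint P v)) *
     (\<Prod>(i,j)\<in>{(i,j). i \<in> {1..r} \<and> j \<in> {1..s} \<and> v \<in> Fset P a i j}. Var (Tw i j))"

definition toric_ideal :: "pt set \<Rightarrow> nat \<Rightarrow> nat \<Rightarrow> (nat \<Rightarrow> nat \<Rightarrow> pt) \<Rightarrow> (pt, 'k::comm_ring_1) mpoly set" where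
  "toric_ideal P r s a = {p \<in> poly_ring (vertices P). subst_hom (phi_var P r s a) p = 0}"

end

theory Submission
  imports Defs "HOL-Library.Multiset" "HOL-Library.Product_Lexorder"
begin

text \<open>
  Every inner 2-minor lies in the kernel of the monomial map: the two sides of an inner interval
  lying on a horizontal (vertical) line belong to one maximal edge interval, and as no hole corner
  \<open>a\<^sub>i\<^sub>j\<close> is a cell of an inner interval, both monomials have equally many factors in
  each \<open>F\<^sub>i\<^sub>j\<close>. The kernel of a monomial map is spanned by the binomials \<open>x\<^sup>U - x\<^sup>U'\<close>
  whose monomials have the same image, so it remains to show that these lie in the polyomino ideal.

  If \<open>U\<close> and \<open>U'\<close> are connected by inner swaps, which replace the diagonal corners of an inner
  interval by its anti-diagonal corners, then \<open>x\<^sup>U - x\<^sup>U'\<close> lies in the polyomino ideal. If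
  \<open>U\<close> and \<open>U'\<close> have the same image, they meet every maximal edge interval equally often and
  have equally many vertices in every quadrant \<open>{x \<le> x\<^sub>0, y \<le> y\<^sub>0}\<close> with \<open>x\<^sub>0\<close> the
  left edge of a column of holes or \<open>m\<close>, and \<open>y\<^sub>0\<close> the lower edge of a row of holes or
  \<open>n\<close>. By induction on the size it suffices to make \<open>U\<close> and \<open>U'\<close> share a vertex \<open>u\<close>
  after swaps. If \<open>u \<in> U'\<close> lies strictly inside a band of hole rows (columns), the vertices
  of \<open>U\<close> on the maximal edge intervals through \<open>u\<close> span a rectangle free of holes, and one
  swap produces \<open>u\<close>. Otherwise \<open>u\<close> is chosen lexicographically least by the nearest column
  of holes to its right and by its row; the quadrant counts then yield a vertex of \<open>U\<close> in the
  same block of the grid as \<open>u\<close>, and at most two swaps produce \<open>u\<close>.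
\<close>

section \<open>Monomials, monomial maps and generated ideals\<close>

definition exps_of_mset :: "'v multiset \<Rightarrow> 'v \<Rightarrow>\<^sub>0 nat" where
  "exps_of_mset U = Abs_poly_mapping (count U)"

definition mset_of_exps :: "('v \<Rightarrow>\<^sub>0 nat) \<Rightarrow> 'v multiset" where
  "mset_of_exps x = Abs_multiset (Poly_Mapping.lookup x)"

lemma lookup_exps_of_mset [simp]: "Poly_Mapping.lookup (exps_of_mset U) = count U"
  unfolding exps_of_mset_def by (simp add: count_eq_zero_iff)

lemma count_mset_of_exps [simp]: "count (mset_of_exps x) = Poly_Mapping.lookup x"
  unfolding mset_of_exps_def by (rule count_Abs_multiset) simp

lemma exps_of_mset_of_exps [simp]: "exps_of_mset (mset_of_exps x) = x"
  by (rule poly_mapping_eqI) simp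

lemma mset_of_exps_of_mset [simp]: "mset_of_exps (exps_of_mset U) = U"
  by (rule multiset_eqI) simp

lemma set_mset_of_exps [simp]: "set_mset (mset_of_exps x) = Poly_Mapping.keys x"
  by (auto simp: in_keys_iff simp flip: count_greater_zero_iff)

lemma mset_of_exps_add: "mset_of_exps (x + y) = mset_of_exps x + mset_of_exps y"
  by (rule multiset_eqI) (simp add: lookup_add)

lemma exps_of_mset_add: "exps_of_mset (U + W) = exps_of_mset U + exps_of_mset W"
  by (rule poly_mapping_eqI) (simp add: lookup_add)

definition mset_monom :: "'v multiset \<Rightarrow> ('v, 'k::comm_ring_1) mpoly" where
  "mset_monom U = Poly_Mapping.single (exps_of_mset U) 1"

lemma mset_monom_add: "mset_monom (U + W) = mset_monom U * mset_monom W"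
  unfolding mset_monom_def by (simp add: mult_single exps_of_mset_add)

lemma mset_monom_pair: "mset_monom {#p, q#} = Var p * Var q"
proof -
  have "exps_of_mset {#p, q#} = Poly_Mapping.single p 1 + Poly_Mapping.single q 1"
    by (rule poly_mapping_eqI) (simp add: lookup_add lookup_single when_def)
  then show ?thesis unfolding mset_monom_def Var_def by (simp add: mult_single)
qed

lemma poly_mapping_sum_singles:
  "p = (\<Sum>x\<in>Poly_Mapping.keys p. Poly_Mapping.single x (Poly_Mapping.lookup p x))"
  by (rule poly_mapping_eqI) (auto simp: lookup_sum lookup_single when_def in_keys_iff)

lemma single_sum: "Poly_Mapping.single k (\<Sum>x\<in>A. f x) = (\<Sum>x\<in>A. Poly_Mapping.single k (f x))"
  by (induction A rule: infinite_finite_induct) (simp_all add: single_add)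

lemma subst_hom_eq_sum_over:
  assumes "finite S" "Poly_Mapping.keys p \<subseteq> S"
  shows "subst_hom f p = (\<Sum>x\<in>S. Poly_Mapping.single 0 (Poly_Mapping.lookup p x) *
                                (\<Prod>v\<in>Poly_Mapping.keys x. f v ^ Poly_Mapping.lookup x v))"
  unfolding subst_hom_def
  by (rule sum.mono_neutral_left) (use assms in \<open>auto simp: in_keys_iff\<close>)

lemma subst_hom_add: "subst_hom f (p + q) = subst_hom f p + subst_hom f q"
  using keys_add[of p q]
  by (simp add: subst_hom_eq_sum_over[of "Poly_Mapping.keys p \<union> Poly_Mapping.keys q"]
      lookup_add single_add distrib_right sum.distrib)

lemma subst_hom_diff: "subst_hom f (p - q) = subst_hom f p - subst_hom f q"
  using keys_diff[of p q]
  by (simp add: subst_hom_eq_sum_over[of "Poly_Mapping.keys p \<union> Poly_Mapping.keys q"]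
      lookup_minus single_diff left_diff_distrib sum_subtractf)

lemma subst_hom_zero [simp]: "subst_hom f 0 = 0"
  by (simp add: subst_hom_def)

lemma subst_hom_sum: "subst_hom f (\<Sum>i\<in>A. g i) = (\<Sum>i\<in>A. subst_hom f (g i))"
  by (induction A rule: infinite_finite_induct) (simp_all add: subst_hom_add)

lemma subst_hom_single:
  "subst_hom f (Poly_Mapping.single x c) = Poly_Mapping.single 0 c * prod_mset (image_mset f (mset_of_exps x))"
  by (simp add: subst_hom_eq_sum_over[of "{x}"] image_prod_mset_multiplicity)

lemma prod_mset_single_monomials:
  "prod_mset (image_mset (\<lambda>v. Poly_Mapping.single (e v) 1) U) =
   Poly_Mapping.single (sum_mset (image_mset e U)) (1::'k::comm_ring_1)"
  by (induction U) (simp_all add: mult_single)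

lemma subst_hom_monomial_map_single:
  "subst_hom (\<lambda>v. Poly_Mapping.single (e v) 1) (Poly_Mapping.single x c) =
   Poly_Mapping.single (sum_mset (image_mset e (mset_of_exps x))) (c::'k::comm_ring_1)"
  by (simp add: subst_hom_single prod_mset_single_monomials mult_single)

lemma poly_ring_add: "p \<in> poly_ring X \<Longrightarrow> q \<in> poly_ring X \<Longrightarrow> p + q \<in> poly_ring X"
  unfolding poly_ring_def using keys_add[of p q] by blast

lemma poly_ring_diff: "p \<in> poly_ring X \<Longrightarrow> q \<in> poly_ring X \<Longrightarrow> p - q \<in> poly_ring X"
  unfolding poly_ring_def using keys_diff[of p q] by blast

lemma poly_ring_mult:
  assumes "p \<in> poly_ring X" "q \<in> poly_ring X"
  shows "p * q \<in> poly_ring X"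
  unfolding poly_ring_def mem_Collect_eq
proof
  fix x assume "x \<in> Poly_Mapping.keys (p * q)"
  then obtain y z where "x = y + z" "y \<in> Poly_Mapping.keys p" "z \<in> Poly_Mapping.keys q"
    using keys_mult[of p q] by blast
  with assms keys_add[of y z] show "Poly_Mapping.keys x \<subseteq> X"
    unfolding poly_ring_def by blast
qed

lemma poly_ring_zero [simp]: "0 \<in> poly_ring X"
  unfolding poly_ring_def by simp

lemma poly_ring_single: "Poly_Mapping.keys x \<subseteq> X \<Longrightarrow> Poly_Mapping.single x c \<in> poly_ring X"
  unfolding poly_ring_def by simp

lemma poly_ring_Var: "v \<in> X \<Longrightarrow> Var v \<in> poly_ring X"
  unfolding Var_def by (rule poly_ring_single) simp

lemma mset_monom_in_poly_ring: "set_mset U \<subseteq> X \<Longrightarrow> mset_monom U \<in> poly_ring X"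
  unfolding mset_monom_def by (rule poly_ring_single) (simp add: in_keys_iff subset_iff)

lemma ideal_gen_zero: "0 \<in> ideal_gen R G"
  unfolding ideal_gen_def by (intro CollectI exI[of _ "{}"]) simp

lemma ideal_gen_generator: "g \<in> G \<Longrightarrow> 1 \<in> R \<Longrightarrow> g \<in> ideal_gen R G"
  unfolding ideal_gen_def by (intro CollectI exI[of _ "{g}"] exI[of _ "\<lambda>_. 1"]) simp

lemma ideal_gen_add:
  assumes "p \<in> ideal_gen (poly_ring X) G" "q \<in> ideal_gen (poly_ring X) G"
  shows "p + q \<in> ideal_gen (poly_ring X) G"
proof -
  obtain F c where F: "finite F" "F \<subseteq> G" "\<forall>g\<in>F. c g \<in> poly_ring X" "p = (\<Sum>g\<in>F. c g * g)"
    using assms(1) unfolding ideal_gen_def by blast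
  obtain F' c' where F': "finite F'" "F' \<subseteq> G" "\<forall>g\<in>F'. c' g \<in> poly_ring X" "q = (\<Sum>g\<in>F'. c' g * g)"
    using assms(2) unfolding ideal_gen_def by blast
  define d where "d g = (if g \<in> F then c g else 0) + (if g \<in> F' then c' g else 0)" for g
  have "p = (\<Sum>g\<in>F \<union> F'. (if g \<in> F then c g else 0) * g)"
    unfolding F(4) by (rule sum.mono_neutral_cong_left) (use F F' in simp_all)
  moreover have "q = (\<Sum>g\<in>F \<union> F'. (if g \<in> F' then c' g else 0) * g)"
    unfolding F'(4) by (rule sum.mono_neutral_cong_left) (use F F' in simp_all)
  ultimately have "p + q = (\<Sum>g\<in>F \<union> F'. d g * g)"
    by (simp add: d_def distrib_right sum.distrib)
  moreover have "\<forall>g\<in>F \<union> F'. d g \<in> poly_ring X"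
    using F F' by (auto simp: d_def intro!: poly_ring_add)
  ultimately show ?thesis
    using F F' unfolding ideal_gen_def by (intro CollectI exI[of _ "F \<union> F'"] exI[of _ d]) simp
qed

lemma ideal_gen_mult:
  assumes "p \<in> ideal_gen (poly_ring X) G" "h \<in> poly_ring X"
  shows "h * p \<in> ideal_gen (poly_ring X) G"
proof -
  obtain F c where F: "finite F" "F \<subseteq> G" "\<forall>g\<in>F. c g \<in> poly_ring X" "p = (\<Sum>g\<in>F. c g * g)"
    using assms(1) unfolding ideal_gen_def by blast
  have "h * p = (\<Sum>g\<in>F. (h * c g) * g)"
    unfolding F(4) by (simp add: sum_distrib_left mult.assoc)
  then show ?thesis
    using F assms(2) unfolding ideal_gen_def
    by (intro CollectI exI[of _ F] exI[of _ "\<lambda>g. h * c g"]) (simp add: poly_ring_mult)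
qed

lemma ideal_gen_diff:
  assumes "p \<in> ideal_gen (poly_ring X) G" "q \<in> ideal_gen (poly_ring X) G"
  shows "p - q \<in> ideal_gen (poly_ring X) G"
proof -
  have "- 1 \<in> poly_ring X" unfolding poly_ring_def by simp
  then have "- 1 * q \<in> ideal_gen (poly_ring X) G" by (rule ideal_gen_mult[OF assms(2)])
  then show ?thesis using ideal_gen_add[OF assms(1), of "- q"] by simp
qed

lemma ideal_gen_sum:
  "(\<And>i. i \<in> A \<Longrightarrow> f i \<in> ideal_gen (poly_ring X) G) \<Longrightarrow> (\<Sum>i\<in>A. f i) \<in> ideal_gen (poly_ring X) G"
  by (induction A rule: infinite_finite_induct) (auto intro: ideal_gen_zero ideal_gen_add)

lemma ideal_gen_subset_poly_ring:
  assumes "G \<subseteq> poly_ring X"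
  shows "ideal_gen (poly_ring X) G \<subseteq> poly_ring X"
proof
  fix p assume "p \<in> ideal_gen (poly_ring X) G"
  then obtain F c where F: "finite F" "F \<subseteq> G" "\<forall>g\<in>F. c g \<in> poly_ring X" "p = (\<Sum>g\<in>F. c g * g)"
    unfolding ideal_gen_def by blast
  have "(\<Sum>g\<in>F. c g * g) \<in> poly_ring X"
    using F(1-3) assms
    by (induction F rule: finite_induct) (auto intro!: poly_ring_add poly_ring_mult)
  then show "p \<in> poly_ring X" using F(4) by simp
qed

lemma subst_hom_monomial_map:
  "subst_hom (\<lambda>v. Poly_Mapping.single (e v) 1) p =
   (\<Sum>x\<in>Poly_Mapping.keys p. Poly_Mapping.single (sum_mset (image_mset e (mset_of_exps x)))
                                 (Poly_Mapping.lookup p x :: 'k::comm_ring_1))"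
  by (subst poly_mapping_sum_singles) (simp add: subst_hom_sum subst_hom_monomial_map_single)

lemma subst_hom_monomial_map_binomial_multiple:
  fixes c :: "('v, 'k::comm_ring_1) mpoly" and e :: "'v \<Rightarrow> 'w \<Rightarrow>\<^sub>0 nat"
  assumes "sum_mset (image_mset e U) = sum_mset (image_mset e U')"
  shows "subst_hom (\<lambda>v. Poly_Mapping.single (e v) 1) (c * (mset_monom U - mset_monom U')) = 0"
proof -
  have image_mult_monom: "subst_hom (\<lambda>v. Poly_Mapping.single (e v) 1) (c * mset_monom W) =
      (\<Sum>x\<in>Poly_Mapping.keys c. Poly_Mapping.single
         (sum_mset (image_mset e (mset_of_exps x)) + sum_mset (image_mset e W)) (Poly_Mapping.lookup c x))"
    for W :: "'v multiset"
  proof -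
    have "c * mset_monom W = (\<Sum>x\<in>Poly_Mapping.keys c. Poly_Mapping.single (x + exps_of_mset W) (Poly_Mapping.lookup c x))"
      by (subst poly_mapping_sum_singles[of c]) (simp add: sum_distrib_right mset_monom_def mult_single)
    then show ?thesis
      by (simp add: subst_hom_sum subst_hom_monomial_map_single mset_of_exps_add)
  qed
  show ?thesis
    by (simp add: right_diff_distrib subst_hom_diff image_mult_monom assms)
qed

lemma binomial_ideal_in_kernel:
  assumes binomial: "\<And>g. g \<in> G \<Longrightarrow> \<exists>U U'. g = mset_monom U - mset_monom U' \<and>
                         sum_mset (image_mset e U) = sum_mset (image_mset e U')"
    and "p \<in> ideal_gen R G"
  shows "subst_hom (\<lambda>v. Poly_Mapping.single (e v) 1) p = (0::('w, 'k::comm_ring_1) mpoly)"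
proof -
  obtain F c where F: "F \<subseteq> G" "p = (\<Sum>g\<in>F. c g * g)"
    using assms(2) unfolding ideal_gen_def by blast
  have "subst_hom (\<lambda>v. Poly_Mapping.single (e v) 1) (c g * g) = (0::('w, 'k) mpoly)" if "g \<in> F" for g
    using binomial[of g] F(1) that subst_hom_monomial_map_binomial_multiple by blast
  then show ?thesis by (simp add: F(2) subst_hom_sum)
qed

lemma sum_single_fibrewise_zero:
  assumes "finite K" "\<And>w. (\<Sum>x | x \<in> K \<and> E x = w. c x) = 0"
  shows "(\<Sum>x\<in>K. Poly_Mapping.single (f (E x)) (c x)) = 0"
proof -
  have "(\<Sum>x\<in>K. Poly_Mapping.single (f (E x)) (c x)) =
        (\<Sum>w\<in>E ` K. \<Sum>x | x \<in> K \<and> E x = w. Poly_Mapping.single (f (E x)) (c x))"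
    by (rule sum.group[symmetric]) (use assms(1) in auto)
  also have "\<dots> = (\<Sum>w\<in>E ` K. Poly_Mapping.single (f w) (\<Sum>x | x \<in> K \<and> E x = w. c x))"
    by (auto simp: single_sum intro!: sum.cong)
  finally show ?thesis by (simp add: assms(2))
qed

text \<open>Replacing every monomial of \<open>p\<close> by a fixed monomial with the same image changes \<open>p\<close> by
  a sum of multiples of binomials, and the result is zero because the coefficients of \<open>p\<close>
  add up to zero on every fibre of the monomial map.\<close>

lemma kernel_in_binomial_ideal:
  assumes binomial: "\<And>U U'. set_mset U \<subseteq> X \<Longrightarrow> set_mset U' \<subseteq> X \<Longrightarrow>
                       sum_mset (image_mset e U) = sum_mset (image_mset e U') \<Longrightarrow>
                       mset_monom U - mset_monom U' \<in> ideal_gen (poly_ring X) G"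
    and p: "p \<in> poly_ring X"
    and kernel: "subst_hom (\<lambda>v. Poly_Mapping.single (e v) 1) p = (0::('w, 'k::comm_ring_1) mpoly)"
  shows "p \<in> ideal_gen (poly_ring X) G"
proof -
  let ?K = "Poly_Mapping.keys p" and ?c = "Poly_Mapping.lookup p"
  define E where "E x = sum_mset (image_mset e (mset_of_exps x))" for x
  define rep where "rep w = (SOME x. x \<in> ?K \<and> E x = w)" for w
  have rep: "rep (E x) \<in> ?K \<and> E (rep (E x)) = E x" if "x \<in> ?K" for x
    unfolding rep_def by (rule someI[of _ x]) (use that in simp)
  have "(\<Sum>x | x \<in> ?K \<and> E x = w. ?c x) = 0" for w
  proof -
    have "Poly_Mapping.lookup (\<Sum>x\<in>?K. Poly_Mapping.single (E x) (?c x)) w = 0"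
      using kernel by (simp add: subst_hom_monomial_map E_def)
    then show ?thesis by (simp add: lookup_sum lookup_single when_def sum.inter_filter)
  qed
  then have representatives: "(\<Sum>x\<in>?K. Poly_Mapping.single (rep (E x)) (?c x)) = 0"
    by (intro sum_single_fibrewise_zero) simp_all
  have "(\<Sum>x\<in>?K. Poly_Mapping.single x (?c x) - Poly_Mapping.single (rep (E x)) (?c x))
        \<in> ideal_gen (poly_ring X) G"
  proof (rule ideal_gen_sum)
    fix x assume x: "x \<in> ?K"
    have vars: "set_mset (mset_of_exps y) \<subseteq> X" if "y \<in> ?K" for y
      using p that unfolding poly_ring_def by simp
    have "Poly_Mapping.single x (?c x) - Poly_Mapping.single (rep (E x)) (?c x) =
          Poly_Mapping.single 0 (?c x) * (mset_monom (mset_of_exps x) - mset_monom (mset_of_exps (rep (E x))))"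
      by (simp add: mset_monom_def mult_single right_diff_distrib)
    also have "\<dots> \<in> ideal_gen (poly_ring X) G"
      using x rep[OF x] by (intro ideal_gen_mult binomial vars poly_ring_single) (simp_all add: E_def)
    finally show "Poly_Mapping.single x (?c x) - Poly_Mapping.single (rep (E x)) (?c x) \<in> ideal_gen (poly_ring X) G" .
  qed
  then show ?thesis
    using representatives poly_mapping_sum_singles[of p] by (simp add: sum_subtractf)
qed

section \<open>Maximal edge intervals\<close>

lemma cell_corner_in_vertices: "(x, y) \<in> P \<Longrightarrow> dx \<le> 1 \<Longrightarrow> dy \<le> 1 \<Longrightarrow> (x + dx, y + dy) \<in> vertices P"
  unfolding vertices_def by force

lemma finite_vertices: "finite P \<Longrightarrow> finite (vertices P)"
proof -
  assume "finite P"
  moreover have "vertices P = (\<lambda>(c, dx, dy). (fst c + dx, snd c + dy)) ` (P \<times> {0..1} \<times> {0..1})"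
    unfolding vertices_def by force
  ultimately show ?thesis by simp
qed

lemma h_edge_vertices:
  assumes "h_edge P (t, y)"
  shows "(t, y) \<in> vertices P \<and> (Suc t, y) \<in> vertices P"
proof -
  from assms consider "(t, y) \<in> P" | "(t, y - 1) \<in> P" "y = y - 1 + 1"
    unfolding h_edge_def by fastforce
  then show ?thesis
  proof cases
    case 1
    then show ?thesis
      using cell_corner_in_vertices[OF 1, of 0 0] cell_corner_in_vertices[OF 1, of 1 0] by simp
  next
    case 2
    then show ?thesis
      using cell_corner_in_vertices[OF 2(1), of 0 1] cell_corner_in_vertices[OF 2(1), of 1 1] by simp
  qed
qed

lemma h_edge_interval_iff:
  "h_edge_interval P I \<longleftrightarrow> (\<exists>p q y. p < q \<and> I = {p..q} \<times> {y} \<and> (\<forall>t\<in>{p..<q}. h_edge P (t, y)))"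
proof -
  have "{(t, y) |t. p \<le> t \<and> t \<le> q} = {p..q} \<times> {y}" for p q y :: nat by auto
  then show ?thesis unfolding h_edge_interval_def by (simp add: Ball_def)
qed

lemma h_edge_interval_subset_vertices:
  assumes "h_edge_interval P I"
  shows "I \<subseteq> vertices P"
proof
  fix v assume "v \<in> I"
  obtain p q y where I: "p < q" "I = {p..q} \<times> {y}" "\<forall>t\<in>{p..<q}. h_edge P (t, y)"
    using assms unfolding h_edge_interval_iff by blast
  with \<open>v \<in> I\<close> obtain t where v: "v = (t, y)" "p \<le> t" "t \<le> q" by auto
  show "v \<in> vertices P"
  proof (cases "t < q")
    case True
    then show ?thesis using I(3) v h_edge_vertices by simp
  next
    case False
    then have "Suc (q - 1) = t" "q - 1 \<in> {p..<q}" using v I(1) by auto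
    then show ?thesis using I(3) v h_edge_vertices[of P "q - 1" y] by simp
  qed
qed

lemma h_edge_interval_Un:
  assumes "h_edge_interval P I" "h_edge_interval P J" "v \<in> I" "v \<in> J"
  shows "h_edge_interval P (I \<union> J)"
proof -
  obtain p q y where I: "p < q" "I = {p..q} \<times> {y}" "\<forall>t\<in>{p..<q}. h_edge P (t, y)"
    using assms(1) unfolding h_edge_interval_iff by blast
  obtain p' q' y' where J: "J = {p'..q'} \<times> {y'}" "\<forall>t\<in>{p'..<q'}. h_edge P (t, y')"
    using assms(2) unfolding h_edge_interval_iff by blast
  have overlap: "y' = y" "p \<le> q'" "p' \<le> q" using I(2) J(1) assms(3,4) by auto
  have "I \<union> J = {min p p'..max q q'} \<times> {y}"
    using I(2) J(1) overlap by auto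
  moreover have "\<forall>t\<in>{min p p'..<max q q'}. h_edge P (t, y)"
  proof
    fix t assume "t \<in> {min p p'..<max q q'}"
    then have "t \<in> {p..<q} \<or> t \<in> {p'..<q'}" using overlap by auto
    then show "h_edge P (t, y)" using I(3) J(2) overlap(1) by blast
  qed
  moreover have "min p p' < max q q'" using I(1) by auto
  ultimately show ?thesis
    unfolding h_edge_interval_iff by blast
qed

lemma max_h_interval_unique:
  assumes "max_h_interval P I" "max_h_interval P J" "v \<in> I" "v \<in> J"
  shows "I = J"
  using h_edge_interval_Un[of P I J v] assms unfolding max_h_interval_def by blast

lemma Hint_eqI: "max_h_interval P I \<Longrightarrow> v \<in> I \<Longrightarrow> Hint P v = I"
  unfolding Hint_def by (rule the_equality) (simp, metis max_h_interval_unique)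

lemma Hint_max:
  assumes "finite P" "v \<in> vertices P"
  shows "max_h_interval P (Hint P v) \<and> v \<in> Hint P v"
proof -
  obtain c dx dy where c: "c \<in> P" "dx \<le> 1" "dy \<le> 1" "v = (fst c + dx, snd c + dy)"
    using assms(2) unfolding vertices_def by blast
  have "dy = 0 \<or> dy = 1" using c(3) by auto
  then have "h_edge P (fst c, snd c + dy)"
    using c(1) by (elim disjE) (simp_all add: h_edge_def)
  then have "h_edge_interval P ({fst c..Suc (fst c)} \<times> {snd c + dy})"
    unfolding h_edge_interval_iff
    by (intro exI[of _ "fst c"] exI[of _ "Suc (fst c)"] exI[of _ "snd c + dy"]) auto
  moreover have "v \<in> {fst c..Suc (fst c)} \<times> {snd c + dy}" using c by auto
  moreover have "finite {I. h_edge_interval P I \<and> v \<in> I}"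
  proof (rule finite_subset)
    show "{I. h_edge_interval P I \<and> v \<in> I} \<subseteq> Pow (vertices P)"
      using h_edge_interval_subset_vertices by blast
  qed (simp add: finite_vertices assms(1))
  ultimately obtain I where "I \<in> {I. h_edge_interval P I \<and> v \<in> I}"
    "\<forall>J \<in> {I. h_edge_interval P I \<and> v \<in> I}. I \<subseteq> J \<longrightarrow> I = J"
    using finite_has_maximal2[of "{I. h_edge_interval P I \<and> v \<in> I}"] by (metis (no_types, lifting) mem_Collect_eq)
  then have I: "h_edge_interval P I" "v \<in> I" "\<And>J. h_edge_interval P J \<Longrightarrow> v \<in> J \<Longrightarrow> I \<subseteq> J \<Longrightarrow> I = J"
    by blast+
  then have "max_h_interval P I"
    unfolding max_h_interval_def by blast
  then show ?thesis using I(2) Hint_eqI by metis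
qed

lemma Hint_eq_iff:
  assumes "finite P" "v \<in> vertices P" "w \<in> vertices P"
  shows "Hint P w = Hint P v \<longleftrightarrow> snd w = snd v \<and>
           (\<forall>t. min (fst v) (fst w) \<le> t \<longrightarrow> t < max (fst v) (fst w) \<longrightarrow> h_edge P (t, snd v))"
    (is "_ \<longleftrightarrow> ?row")
proof
  assume eq: "Hint P w = Hint P v"
  have "h_edge_interval P (Hint P v)"
    using Hint_max[OF assms(1,2)] unfolding max_h_interval_def by blast
  then obtain p q y where I: "Hint P v = {p..q} \<times> {y}" "\<forall>t\<in>{p..<q}. h_edge P (t, y)"
    unfolding h_edge_interval_iff by blast
  have "v \<in> {p..q} \<times> {y}" "w \<in> {p..q} \<times> {y}"
    using Hint_max[OF assms(1,2)] Hint_max[OF assms(1,3)] eq I(1) by auto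
  then have "snd w = snd v"
    "\<forall>t. min (fst v) (fst w) \<le> t \<longrightarrow> t < max (fst v) (fst w) \<longrightarrow> t \<in> {p..<q} \<and> y = snd v"
    by (auto simp: mem_Times_iff)
  with I(2) show ?row by blast
next
  assume row: ?row
  show "Hint P w = Hint P v"
  proof (cases "fst w = fst v")
    case True
    with row have "w = v" by (simp add: prod_eq_iff)
    then show ?thesis by simp
  next
    case False
    let ?S = "{min (fst v) (fst w)..max (fst v) (fst w)} \<times> {snd v}"
    have "h_edge_interval P ?S"
      unfolding h_edge_interval_iff using False row
      by (intro exI[of _ "min (fst v) (fst w)"] exI[of _ "max (fst v) (fst w)"] exI[of _ "snd v"]) auto
    moreover have "v \<in> ?S" "w \<in> ?S" using row by (auto simp: mem_Times_iff)
    ultimately have S: "h_edge_interval P ?S" "v \<in> ?S" "w \<in> ?S" by blast+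
    have H: "max_h_interval P (Hint P v)" "v \<in> Hint P v" using Hint_max[OF assms(1,2)] by auto
    have "h_edge_interval P (Hint P v \<union> ?S)"
      using h_edge_interval_Un[of P "Hint P v" ?S v] H S(1,2) unfolding max_h_interval_def by blast
    then have "\<not> Hint P v \<subset> Hint P v \<union> ?S" using H(1) unfolding max_h_interval_def by blast
    then have "w \<in> Hint P v" using S(3) by blast
    then show ?thesis using Hint_eqI[OF H(1)] by blast
  qed
qed


lemma swap_mem_vertices_transpose: "prod.swap v \<in> vertices (prod.swap ` P) \<longleftrightarrow> v \<in> vertices P"
proof
  assume "v \<in> vertices P"
  then obtain c dx dy where "c \<in> P" "dx \<le> 1" "dy \<le> 1" "v = (fst c + dx, snd c + dy)"
    unfolding vertices_def by blast
  then show "prod.swap v \<in> vertices (prod.swap ` P)"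
    using cell_corner_in_vertices[of "snd c" "fst c" "prod.swap ` P" dy dx] by (cases c) simp
next
  assume "prod.swap v \<in> vertices (prod.swap ` P)"
  then obtain c dx dy where "c \<in> prod.swap ` P" "dx \<le> 1" "dy \<le> 1" "prod.swap v = (fst c + dx, snd c + dy)"
    unfolding vertices_def by blast
  then show "v \<in> vertices P"
    using cell_corner_in_vertices[of "snd c" "fst c" P dy dx] by (cases c, cases v) auto
qed

lemma swap_image_swap_image [simp]: "prod.swap ` prod.swap ` A = A"
  by (simp add: image_comp)

lemma swap_image_eq_Times_iff: "prod.swap ` I = A \<times> B \<longleftrightarrow> I = B \<times> A"
  by (metis swap_image_swap_image product_swap)

lemma v_edge_transpose: "v_edge P (x, t) \<longleftrightarrow> h_edge (prod.swap ` P) (t, x)"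
  unfolding v_edge_def h_edge_def by simp

lemma v_edge_interval_transpose: "v_edge_interval P I \<longleftrightarrow> h_edge_interval (prod.swap ` P) (prod.swap ` I)"
proof -
  have "{(x, t) |t. p \<le> t \<and> t \<le> q} = {x} \<times> {p..q}" for p q x :: nat by auto
  then show ?thesis
    unfolding v_edge_interval_def h_edge_interval_iff v_edge_transpose swap_image_eq_Times_iff
    by (simp add: Ball_def)
qed

lemma max_v_interval_transpose: "max_v_interval P I \<longleftrightarrow> max_h_interval (prod.swap ` P) (prod.swap ` I)"
proof -
  have swap_psubset: "prod.swap ` A \<subset> prod.swap ` B \<longleftrightarrow> A \<subset> B" for A B :: "pt set"
    by (simp add: inj_image_subset_iff inj_image_eq_iff psubset_eq)
  have "(\<exists>J. v_edge_interval P J \<and> I \<subset> J) \<longleftrightarrow>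
        (\<exists>J. h_edge_interval (prod.swap ` P) J \<and> prod.swap ` I \<subset> J)"
  proof
    assume "\<exists>J. v_edge_interval P J \<and> I \<subset> J"
    then obtain J where "v_edge_interval P J" "I \<subset> J" by blast
    then have "h_edge_interval (prod.swap ` P) (prod.swap ` J)" "prod.swap ` I \<subset> prod.swap ` J"
      by (simp_all add: v_edge_interval_transpose swap_psubset)
    then show "\<exists>J. h_edge_interval (prod.swap ` P) J \<and> prod.swap ` I \<subset> J" by blast
  next
    assume "\<exists>J. h_edge_interval (prod.swap ` P) J \<and> prod.swap ` I \<subset> J"
    then obtain J where J: "h_edge_interval (prod.swap ` P) J" "prod.swap ` I \<subset> J" by blast
    have "v_edge_interval P (prod.swap ` J)" "I \<subset> prod.swap ` J"
      using J swap_psubset[of I "prod.swap ` J"] by (simp_all add: v_edge_interval_transpose)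
    then show "\<exists>J. v_edge_interval P J \<and> I \<subset> J" by blast
  qed
  then show ?thesis
    unfolding max_v_interval_def max_h_interval_def v_edge_interval_transpose by simp
qed

lemma Vint_eqI:
  assumes "max_v_interval P I" "v \<in> I"
  shows "Vint P v = I"
  unfolding Vint_def
proof (rule the_equality)
  fix J assume "max_v_interval P J \<and> v \<in> J"
  then have "prod.swap ` J = prod.swap ` I"
    using assms max_h_interval_unique[of "prod.swap ` P" "prod.swap ` J" "prod.swap ` I" "prod.swap v"]
    unfolding max_v_interval_transpose by blast
  then show "J = I" by (simp add: inj_image_eq_iff)
qed (use assms in simp)

lemma Vint_transpose:
  assumes "finite P" "v \<in> vertices P"
  shows "Vint P v = prod.swap ` Hint (prod.swap ` P) (prod.swap v)"
proof (rule Vint_eqI)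
  have "max_h_interval (prod.swap ` P) (Hint (prod.swap ` P) (prod.swap v)) \<and>
        prod.swap v \<in> Hint (prod.swap ` P) (prod.swap v)"
    using assms by (intro Hint_max) (simp_all add: swap_mem_vertices_transpose)
  then show "max_v_interval P (prod.swap ` Hint (prod.swap ` P) (prod.swap v))"
    "v \<in> prod.swap ` Hint (prod.swap ` P) (prod.swap v)"
    unfolding max_v_interval_transpose by (simp, cases v, simp)
qed

lemma Vint_eq_iff:
  assumes "finite P" "v \<in> vertices P" "w \<in> vertices P"
  shows "Vint P w = Vint P v \<longleftrightarrow> fst w = fst v \<and>
           (\<forall>t. min (snd v) (snd w) \<le> t \<longrightarrow> t < max (snd v) (snd w) \<longrightarrow> v_edge P (fst v, t))"
proof -
  have "Vint P w = Vint P v \<longleftrightarrow> Hint (prod.swap ` P) (prod.swap w) = Hint (prod.swap ` P) (prod.swap v)"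
    using assms by (simp add: Vint_transpose inj_image_eq_iff)
  also have "\<dots> \<longleftrightarrow> fst w = fst v \<and>
           (\<forall>t. min (snd v) (snd w) \<le> t \<longrightarrow> t < max (snd v) (snd w) \<longrightarrow> h_edge (prod.swap ` P) (t, fst v))"
    using assms by (subst Hint_eq_iff) (simp_all add: swap_mem_vertices_transpose)
  finally show ?thesis by (simp add: v_edge_transpose)
qed

section \<open>The monomial map of a polyomino\<close>

definition Fset_indices :: "pt set \<Rightarrow> nat \<Rightarrow> nat \<Rightarrow> (nat \<Rightarrow> nat \<Rightarrow> pt) \<Rightarrow> pt \<Rightarrow> (nat \<times> nat) set" where
  "Fset_indices P r s a v = {(i, j). i \<in> {1..r} \<and> j \<in> {1..s} \<and> v \<in> Fset P a i j}"

definition phi_exponent :: "pt set \<Rightarrow> nat \<Rightarrow> nat \<Rightarrow> (nat \<Rightarrow> nat \<Rightarrow> pt) \<Rightarrow> pt \<Rightarrow> tvar \<Rightarrow>\<^sub>0 nat" where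
  "phi_exponent P r s a v =
     Poly_Mapping.single (Th (Hint P v)) 1 + Poly_Mapping.single (Tv (Vint P v)) 1 +
     (\<Sum>x\<in>Fset_indices P r s a v. Poly_Mapping.single (Tw (fst x) (snd x)) 1)"

lemma finite_Fset_indices: "finite (Fset_indices P r s a v)"
  by (rule finite_subset[of _ "{1..r} \<times> {1..s}"]) (auto simp: Fset_indices_def)

lemma prod_single_one:
  "(\<Prod>x\<in>A. Poly_Mapping.single (f x) (1::'k::comm_ring_1)) = Poly_Mapping.single (\<Sum>x\<in>A. f x) 1"
  by (induction A rule: infinite_finite_induct) (simp_all add: mult_single)

lemma phi_var_eq_single:
  "(phi_var P r s a v :: (tvar, 'k::comm_ring_1) mpoly) = Poly_Mapping.single (phi_exponent P r s a v) 1"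
proof -
  have "(\<Prod>(i, j)\<in>Fset_indices P r s a v. Var (Tw i j) :: (tvar, 'k) mpoly) =
        (\<Prod>x\<in>Fset_indices P r s a v. Poly_Mapping.single (Poly_Mapping.single (Tw (fst x) (snd x)) 1) 1)"
    by (rule prod.cong) (auto simp: Var_def)
  then show ?thesis
    unfolding phi_var_def Fset_indices_def[symmetric]
    by (simp only:) (simp add: phi_exponent_def Var_def mult_single prod_single_one)
qed

lemma lookup_phi_exponent:
  "Poly_Mapping.lookup (phi_exponent P r s a v) (Th I) = (if Hint P v = I then 1 else 0)"
  "Poly_Mapping.lookup (phi_exponent P r s a v) (Tv I) = (if Vint P v = I then 1 else 0)"
  "Poly_Mapping.lookup (phi_exponent P r s a v) (Tw i j) = (if (i, j) \<in> Fset_indices P r s a v then 1 else 0)"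
proof -
  have lookup_Tw_sum: "Poly_Mapping.lookup (\<Sum>x\<in>Fset_indices P r s a v. Poly_Mapping.single (Tw (fst x) (snd x)) (1::nat)) t =
        (\<Sum>x\<in>Fset_indices P r s a v. if t = Tw (fst x) (snd x) then 1 else 0 :: nat)" for t
    by (auto simp: lookup_sum lookup_single when_def intro!: sum.cong)
  show "Poly_Mapping.lookup (phi_exponent P r s a v) (Th I) = (if Hint P v = I then 1 else 0)"
    "Poly_Mapping.lookup (phi_exponent P r s a v) (Tv I) = (if Vint P v = I then 1 else 0)"
    unfolding phi_exponent_def lookup_add lookup_Tw_sum by (simp_all add: lookup_single when_def)
  have "(\<Sum>x\<in>Fset_indices P r s a v. if Tw i j = Tw (fst x) (snd x) then 1 else 0) =
        (\<Sum>x\<in>Fset_indices P r s a v. if x = (i, j) then 1 else (0::nat))"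
    by (rule sum.cong) auto
  then show "Poly_Mapping.lookup (phi_exponent P r s a v) (Tw i j) = (if (i, j) \<in> Fset_indices P r s a v then 1 else 0)"
    unfolding phi_exponent_def lookup_add lookup_Tw_sum
    by (simp add: lookup_single finite_Fset_indices sum.delta)
qed

lemma lookup_phi_weight:
  "Poly_Mapping.lookup (sum_mset (image_mset (phi_exponent P r s a) U)) (Th I) = count (image_mset (Hint P) U) I"
  "Poly_Mapping.lookup (sum_mset (image_mset (phi_exponent P r s a) U)) (Tv I) = count (image_mset (Vint P) U) I"
  "Poly_Mapping.lookup (sum_mset (image_mset (phi_exponent P r s a) U)) (Tw i j) =
     (if i \<in> {1..r} \<and> j \<in> {1..s} then size {#v \<in># U. v \<in> Fset P a i j#} else 0)"
  by (induction U) (auto simp: lookup_add lookup_phi_exponent Fset_indices_def)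

lemma phi_weight_eq_iff:
  "sum_mset (image_mset (phi_exponent P r s a) U) = sum_mset (image_mset (phi_exponent P r s a) U') \<longleftrightarrow>
   image_mset (Hint P) U = image_mset (Hint P) U' \<and> image_mset (Vint P) U = image_mset (Vint P) U' \<and>
   (\<forall>i\<in>{1..r}. \<forall>j\<in>{1..s}. size {#v \<in># U. v \<in> Fset P a i j#} = size {#v \<in># U'. v \<in> Fset P a i j#})"
  (is "?w U = ?w U' \<longleftrightarrow> ?inv")
proof
  assume "?w U = ?w U'"
  then have "Poly_Mapping.lookup (?w U) t = Poly_Mapping.lookup (?w U') t" for t by simp
  from this[of "Th _"] this[of "Tv _"] this[of "Tw _ _"] show ?inv
    unfolding lookup_phi_weight by (metis multiset_eqI)
next
  assume ?inv
  show "?w U = ?w U'"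
  proof (rule poly_mapping_eqI)
    fix t show "Poly_Mapping.lookup (?w U) t = Poly_Mapping.lookup (?w U') t"
      using \<open>?inv\<close> by (cases t) (simp_all add: lookup_phi_weight)
  qed
qed

section \<open>Inner swaps\<close>

definition inner_swap :: "pt set \<Rightarrow> pt multiset \<Rightarrow> pt multiset \<Rightarrow> bool" where
  "inner_swap P U U' \<longleftrightarrow> (\<exists>A B W. inner_interval P A B \<and> set_mset W \<subseteq> vertices P \<and>
     U = {#A, B#} + W \<and> U' = {#(fst A, snd B), (fst B, snd A)#} + W)"

definition inner_rectangle :: "pt set \<Rightarrow> pt \<Rightarrow> pt \<Rightarrow> bool" where
  "inner_rectangle P p q \<longleftrightarrow> inner_interval P (min (fst p) (fst q), min (snd p) (snd q))
                                                (max (fst p) (fst q), max (snd p) (snd q))"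

lemma inner_interval_vertices:
  assumes "inner_interval P A B"
  shows "A \<in> vertices P" "B \<in> vertices P" "(fst A, snd B) \<in> vertices P" "(fst B, snd A) \<in> vertices P"
proof -
  obtain x1 y1 x2 y2 where AB: "A = (x1, y1)" "B = (x2, y2)" by (cases A, cases B)
  have lt: "x1 < x2" "y1 < y2" and cells: "\<And>c. cell_in c A B \<Longrightarrow> c \<in> P"
    using assms AB unfolding inner_interval_def by auto
  have "(x1, y1) \<in> P" "(x2 - 1, y2 - 1) \<in> P" "(x1, y2 - 1) \<in> P" "(x2 - 1, y1) \<in> P"
    using lt AB by (auto intro!: cells simp: cell_in_def)
  then have "(x1 + 0, y1 + 0) \<in> vertices P" "(x2 - 1 + 1, y2 - 1 + 1) \<in> vertices P"
    "(x1 + 0, y2 - 1 + 1) \<in> vertices P" "(x2 - 1 + 1, y1 + 0) \<in> vertices P"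
    by (simp_all only: cell_corner_in_vertices le_refl zero_le)
  then show "A \<in> vertices P" "B \<in> vertices P" "(fst A, snd B) \<in> vertices P" "(fst B, snd A) \<in> vertices P"
    using AB lt by simp_all
qed

lemma inner_swap_vertices:
  assumes "inner_swap P U U'"
  shows "set_mset U \<subseteq> vertices P" "set_mset U' \<subseteq> vertices P"
proof -
  obtain A B W where "inner_interval P A B" "set_mset W \<subseteq> vertices P"
    "U = {#A, B#} + W" "U' = {#(fst A, snd B), (fst B, snd A)#} + W"
    using assms unfolding inner_swap_def by blast
  then show "set_mset U \<subseteq> vertices P" "set_mset U' \<subseteq> vertices P"
    using inner_interval_vertices by simp_all
qed

lemma equivclp_inner_swap_vertices:
  "equivclp (inner_swap P) U U' \<Longrightarrow> set_mset U \<subseteq> vertices P \<Longrightarrow> set_mset U' \<subseteq> vertices P"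
  by (induction rule: equivclp_induct) (auto dest: inner_swap_vertices)

lemma equivclp_inner_swap_add_mset:
  assumes "equivclp (inner_swap P) U U'" "u \<in> vertices P"
  shows "equivclp (inner_swap P) (add_mset u U) (add_mset u U')"
proof -
  have "inner_swap P (add_mset u W) (add_mset u W')" if "inner_swap P W W'" for W W'
    using that assms(2) unfolding inner_swap_def by (metis add_mset_add_single insert_subset set_mset_add_mset_insert union_assoc)
  with assms(1) show ?thesis
    by (induction rule: equivclp_induct) (auto intro: equivclp_into_equivclp)
qed

lemma inner_swap_in_polyomino_ideal:
  assumes "inner_swap P U U'"
  shows "mset_monom U - mset_monom U' \<in> (polyomino_ideal P :: (pt, 'k::comm_ring_1) mpoly set)"
proof -
  obtain A B W where swap: "inner_interval P A B" "set_mset W \<subseteq> vertices P"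
    "U = {#A, B#} + W" "U' = {#(fst A, snd B), (fst B, snd A)#} + W"
    using assms unfolding inner_swap_def by blast
  have "Var A * Var B - Var (fst A, snd B) * Var (fst B, snd A) \<in> (polyomino_ideal P :: (pt, 'k) mpoly set)"
    unfolding polyomino_ideal_def using swap(1)
    by (intro ideal_gen_generator) (blast, simp add: poly_ring_def)
  then have "mset_monom W * (Var A * Var B - Var (fst A, snd B) * Var (fst B, snd A))
             \<in> (polyomino_ideal P :: (pt, 'k) mpoly set)"
    unfolding polyomino_ideal_def by (rule ideal_gen_mult) (rule mset_monom_in_poly_ring[OF swap(2)])
  moreover have "mset_monom U - mset_monom U' =
      mset_monom W * (Var A * Var B - Var (fst A, snd B) * Var (fst B, snd A) :: (pt, 'k) mpoly)"
    unfolding swap(3,4) mset_monom_add mset_monom_pair by (simp add: algebra_simps)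
  ultimately show ?thesis by simp
qed

lemma equivclp_inner_swap_in_polyomino_ideal:
  assumes "equivclp (inner_swap P) U U'"
  shows "mset_monom U - mset_monom U' \<in> (polyomino_ideal P :: (pt, 'k::comm_ring_1) mpoly set)"
  using assms
proof (induction rule: equivclp_induct)
  case base
  then show ?case unfolding polyomino_ideal_def by (simp add: ideal_gen_zero)
next
  case (step y z)
  have "mset_monom y - mset_monom z \<in> (polyomino_ideal P :: (pt, 'k) mpoly set)"
  proof (cases "inner_swap P y z")
    case True
    then show ?thesis by (rule inner_swap_in_polyomino_ideal)
  next
    case False
    then have "mset_monom z - mset_monom y \<in> (polyomino_ideal P :: (pt, 'k) mpoly set)"
      using step.hyps(2) by (blast intro: inner_swap_in_polyomino_ideal)
    then show ?thesis
      unfolding polyomino_ideal_def using ideal_gen_diff[OF ideal_gen_zero] by fastforce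
  qed
  then show ?case
    using step.IH ideal_gen_add unfolding polyomino_ideal_def by fastforce
qed

lemma equivclp_inner_swap_rectangle:
  assumes "fst p \<noteq> fst q" "snd p \<noteq> snd q" "inner_rectangle P p q" "set_mset W \<subseteq> vertices P"
  shows "equivclp (inner_swap P) (add_mset p (add_mset q W)) (add_mset (fst p, snd q) (add_mset (fst q, snd p) W))"
proof -
  obtain x1 y1 x2 y2 where pq: "p = (x1, y1)" "q = (x2, y2)" by (cases p, cases q)
  have swap: "inner_swap P ({#A, B#} + W) ({#(fst A, snd B), (fst B, snd A)#} + W)"
    if "inner_interval P A B" for A B
    unfolding inner_swap_def using that assms(4) by blast
  consider "x1 < x2" "y1 < y2" | "x1 < x2" "y2 < y1" | "x2 < x1" "y1 < y2" | "x2 < x1" "y2 < y1"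
    using assms(1,2) pq by fastforce
  then show ?thesis
    using assms(3) unfolding inner_rectangle_def pq
    by cases (auto dest!: swap simp: add_mset_commute intro: converse_r_into_equivclp)
qed

section \<open>Grid polyominoes\<close>

lemma image_mset_eq_if_determined:
  assumes "image_mset h U = image_mset h U'"
    and "\<And>v w. v \<in># U + U' \<Longrightarrow> w \<in># U + U' \<Longrightarrow> h v = h w \<Longrightarrow> f v = f w"
  shows "image_mset f U = image_mset f U'"
proof -
  define g where "g I = f (SOME v. v \<in># U + U' \<and> h v = I)" for I
  have g: "g (h v) = f v" if "v \<in># U + U'" for v
    unfolding g_def using someI[of "\<lambda>w. w \<in># U + U' \<and> h w = h v" v] that assms(2) by blast
  have "image_mset f U = image_mset g (image_mset h U)"
    using g by (auto simp: image_mset.compositionality intro!: image_mset_cong)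
  also have "\<dots> = image_mset f U'"
    using g by (auto simp: assms(1) image_mset.compositionality intro!: image_mset_cong)
  finally show ?thesis .
qed

lemma mset_has_least:
  fixes f :: "'a \<Rightarrow> 'b::linorder"
  assumes "M \<noteq> {#}"
  shows "\<exists>u\<in>#M. \<forall>v\<in>#M. f u \<le> f v"
proof -
  have "Min (f ` set_mset M) \<in> f ` set_mset M" using assms by (intro Min_in) auto
  then obtain u where u: "u \<in># M" "f u = Min (f ` set_mset M)" by auto
  then have "\<forall>v\<in>#M. f u \<le> f v" by simp
  with u(1) show ?thesis by blast
qed

lemma interval_not_between:
  fixes l h z u t :: nat
  assumes "l \<in> X" "\<And>x. x \<in> X \<Longrightarrow> x < u \<Longrightarrow> x < z" "\<And>x. x \<in> X \<Longrightarrow> u \<le> x \<Longrightarrow> z \<le> x"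
    and "\<not> (l < z \<and> z < h)" "\<not> (l < u \<and> u < h)" "min z u \<le> t" "t < max z u"
  shows "\<not> (l \<le> t \<and> t < h)"
  using assms(2,3)[OF assms(1)] assms(4-7) by (cases "z \<le> u") auto

locale grid =
  fixes m n r s :: nat and a b :: "nat \<Rightarrow> nat \<Rightarrow> pt"
  assumes grid_data: "grid_data m n r s a b"
begin

abbreviation cells :: "pt set" where
  "cells \<equiv> grid_polyomino m n r s a b"

abbreviation verts :: "pt set" where
  "verts \<equiv> vertices cells"

abbreviation weight :: "pt multiset \<Rightarrow> tvar \<Rightarrow>\<^sub>0 nat" where
  "weight U \<equiv> sum_mset (image_mset (phi_exponent cells r s a) U)"

abbreviation moves :: "pt multiset \<Rightarrow> pt multiset \<Rightarrow> bool" where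
  "moves \<equiv> equivclp (inner_swap cells)"

lemma hole_bounds:
  assumes "i \<in> {1..r}" "j \<in> {1..s}"
  shows "1 < fst (a i j)" "fst (a i j) < fst (b i j)" "fst (b i j) < m"
    "1 < snd (a i j)" "snd (a i j) < snd (b i j)" "snd (b i j) < n"
  using grid_data assms unfolding grid_data_def by blast+

lemma hole_columns_aligned:
  assumes "i \<in> {1..r}" "j \<in> {1..s}" "k \<in> {1..s}"
  shows "fst (a i j) = fst (a i k)" "fst (b i j) = fst (b i k)"
  using grid_data assms unfolding grid_data_def by blast+

lemma hole_rows_aligned:
  assumes "j \<in> {1..s}" "i \<in> {1..r}" "k \<in> {1..r}"
  shows "snd (a i j) = snd (a k j)" "snd (b i j) = snd (b k j)"
  using grid_data assms unfolding grid_data_def by blast+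

lemma mem_cells_iff:
  "c \<in> cells \<longleftrightarrow> 1 \<le> fst c \<and> fst c + 1 \<le> m \<and> 1 \<le> snd c \<and> snd c + 1 \<le> n \<and>
                 \<not> (\<exists>i\<in>{1..r}. \<exists>j\<in>{1..s}. cell_in c (a i j) (b i j))"
  unfolding grid_polyomino_def cell_in_def by auto

lemma finite_cells: "finite cells"
  by (rule finite_subset[of _ "{1..m} \<times> {1..n}"]) (auto simp: mem_cells_iff)

lemma vertex_bounds:
  assumes "v \<in> verts"
  shows "1 \<le> fst v" "fst v \<le> m" "1 \<le> snd v" "snd v \<le> n"
  using assms unfolding vertices_def mem_cells_iff by auto

lemma hole_corner_notin_cells: "i \<in> {1..r} \<Longrightarrow> j \<in> {1..s} \<Longrightarrow> a i j \<notin> cells"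
  using hole_bounds[of i j] unfolding mem_cells_iff cell_in_def by fastforce

lemma mem_Fset_iff: "v \<in> verts \<Longrightarrow> v \<in> Fset cells a i j \<longleftrightarrow> fst v \<le> fst (a i j) \<and> snd v \<le> snd (a i j)"
  unfolding Fset_def by simp

lemma inner_interval_weight:
  assumes "inner_interval cells A B"
  shows "weight {#A, B#} = weight {#(fst A, snd B), (fst B, snd A)#}"
proof -
  let ?C = "(fst A, snd B)" and ?D = "(fst B, snd A)"
  have lt: "fst A < fst B" "snd A < snd B" and cells: "\<And>c. cell_in c A B \<Longrightarrow> c \<in> cells"
    using assms unfolding inner_interval_def by auto
  note V = inner_interval_vertices[OF assms]
  have "Hint cells ?D = Hint cells A"
    using lt by (subst Hint_eq_iff[OF finite_cells V(1,4)]) (auto intro!: cells simp: h_edge_def cell_in_def)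
  moreover have "Hint cells ?C = Hint cells B"
    using lt by (subst Hint_eq_iff[OF finite_cells V(2,3)]) (auto intro!: cells simp: h_edge_def cell_in_def)
  moreover have "Vint cells ?C = Vint cells A"
    using lt by (subst Vint_eq_iff[OF finite_cells V(1,3)]) (auto intro!: cells simp: v_edge_def cell_in_def)
  moreover have "Vint cells ?D = Vint cells B"
    using lt by (subst Vint_eq_iff[OF finite_cells V(2,4)]) (auto intro!: cells simp: v_edge_def cell_in_def)
  moreover have "size {#v \<in># {#A, B#}. v \<in> Fset cells a i j#} = size {#v \<in># {#?C, ?D#}. v \<in> Fset cells a i j#}"
    if "i \<in> {1..r}" "j \<in> {1..s}" for i j
  proof -
    have "\<not> (fst A \<le> fst (a i j) \<and> fst (a i j) < fst B \<and> snd A \<le> snd (a i j) \<and> snd (a i j) < snd B)"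
      using cells hole_corner_notin_cells[OF that] unfolding cell_in_def by force
    then show ?thesis using V lt by (auto simp: mem_Fset_iff)
  qed
  ultimately show ?thesis
    unfolding phi_weight_eq_iff by (simp add: add_mset_commute)
qed

lemma inner_swap_weight: "inner_swap cells U U' \<Longrightarrow> weight U = weight U'"
proof -
  assume "inner_swap cells U U'"
  then obtain A B W where "inner_interval cells A B"
    "U = {#A, B#} + W" "U' = {#(fst A, snd B), (fst B, snd A)#} + W"
    unfolding inner_swap_def by blast
  then show ?thesis
    using inner_interval_weight by (simp only: image_mset_union sum_mset.union)
qed

lemma moves_weight: "moves U U' \<Longrightarrow> weight U = weight U'"
  by (induction rule: equivclp_induct) (auto dest: inner_swap_weight)

lemma weight_eq_image_snd:
  assumes "weight U = weight U'" "set_mset U \<subseteq> verts" "set_mset U' \<subseteq> verts"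
  shows "image_mset snd U = image_mset snd U'"
proof (rule image_mset_eq_if_determined)
  show "image_mset (Hint cells) U = image_mset (Hint cells) U'"
    using assms(1) unfolding phi_weight_eq_iff by blast
  show "snd v = snd w" if "v \<in># U + U'" "w \<in># U + U'" "Hint cells v = Hint cells w" for v w
    using that assms(2,3) Hint_eq_iff[OF finite_cells, of w v] by auto
qed

lemma weight_eq_image_fst:
  assumes "weight U = weight U'" "set_mset U \<subseteq> verts" "set_mset U' \<subseteq> verts"
  shows "image_mset fst U = image_mset fst U'"
proof (rule image_mset_eq_if_determined)
  show "image_mset (Vint cells) U = image_mset (Vint cells) U'"
    using assms(1) unfolding phi_weight_eq_iff by blast
  show "fst v = fst w" if "v \<in># U + U'" "w \<in># U + U'" "Vint cells v = Vint cells w" for v w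
    using that assms(2,3) Vint_eq_iff[OF finite_cells, of w v] by auto
qed

definition hole_xs :: "nat set" where
  "hole_xs = insert m {fst (a i j) |i j. i \<in> {1..r} \<and> j \<in> {1..s}}"

definition hole_ys :: "nat set" where
  "hole_ys = insert n {snd (a i j) |i j. i \<in> {1..r} \<and> j \<in> {1..s}}"

lemma weight_eq_quadrant:
  assumes eq: "weight U = weight U'" and verts: "set_mset U \<subseteq> verts" "set_mset U' \<subseteq> verts"
    and "x \<in> hole_xs" "y \<in> hole_ys"
  shows "size {#v \<in># U. fst v \<le> x \<and> snd v \<le> y#} = size {#v \<in># U'. fst v \<le> x \<and> snd v \<le> y#}"
proof -
  have restrict: "{#v \<in># W. fst v \<le> x \<and> snd v \<le> y#} = {#v \<in># W. Q v#}"
    if "set_mset W \<subseteq> verts" "\<And>v. v \<in> verts \<Longrightarrow> (fst v \<le> x \<and> snd v \<le> y) = Q v" for W Q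
    using that by (intro filter_mset_cong0) blast
  have image_count: "size {#v \<in># W. Q (f v)#} = size {#t \<in># image_mset f W. Q t#}" for W Q and f :: "pt \<Rightarrow> nat"
    by (simp add: filter_mset_image_mset)
  consider "x = m" | "y = n" | i j i' j' where "i \<in> {1..r}" "j \<in> {1..s}" "i' \<in> {1..r}" "j' \<in> {1..s}"
    "x = fst (a i j)" "y = snd (a i' j')"
    using assms(4,5) unfolding hole_xs_def hole_ys_def by blast
  then show ?thesis
  proof cases
    case 1
    then have "{#v \<in># W. fst v \<le> x \<and> snd v \<le> y#} = {#v \<in># W. snd v \<le> y#}" if "set_mset W \<subseteq> verts" for W
      using that vertex_bounds by (intro restrict) auto
    then show ?thesis
      using verts image_count[of "\<lambda>t. t \<le> y" snd] weight_eq_image_snd[OF eq verts] by simp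
  next
    case 2
    then have "{#v \<in># W. fst v \<le> x \<and> snd v \<le> y#} = {#v \<in># W. fst v \<le> x#}" if "set_mset W \<subseteq> verts" for W
      using that vertex_bounds by (intro restrict) auto
    then show ?thesis
      using verts image_count[of "\<lambda>t. t \<le> x" fst] weight_eq_image_fst[OF eq verts] by simp
  next
    case 3
    have "fst (a i j') = x" "snd (a i j') = y"
      using 3 hole_columns_aligned[of i j j'] hole_rows_aligned[of j' i i'] by simp_all
    then have "{#v \<in># W. fst v \<le> x \<and> snd v \<le> y#} = {#v \<in># W. v \<in> Fset cells a i j'#}"
      if "set_mset W \<subseteq> verts" for W
      using that by (intro restrict) (simp_all add: mem_Fset_iff)
    then show ?thesis
      using verts eq 3 unfolding phi_weight_eq_iff by simp
  qed
qed

lemma weight_eq_partners: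
  assumes "weight U = weight U'" "u \<in># U'"
  obtains p q where "p \<in># U" "Hint cells p = Hint cells u" "q \<in># U" "Vint cells q = Vint cells u"
proof -
  have "Hint cells u \<in># image_mset (Hint cells) U" "Vint cells u \<in># image_mset (Vint cells) U"
    using assms unfolding phi_weight_eq_iff by simp_all
  then show ?thesis using that by auto
qed

definition cols_clear :: "nat \<Rightarrow> nat \<Rightarrow> bool" where
  "cols_clear x x' \<longleftrightarrow> (\<forall>t. min x x' \<le> t \<longrightarrow> t < max x x' \<longrightarrow>
     (\<forall>i\<in>{1..r}. \<forall>j\<in>{1..s}. \<not> (fst (a i j) \<le> t \<and> t < fst (b i j))))"

definition rows_clear :: "nat \<Rightarrow> nat \<Rightarrow> bool" where
  "rows_clear y y' \<longleftrightarrow> (\<forall>t. min y y' \<le> t \<longrightarrow> t < max y y' \<longrightarrow>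
     (\<forall>i\<in>{1..r}. \<forall>j\<in>{1..s}. \<not> (snd (a i j) \<le> t \<and> t < snd (b i j))))"

definition in_hole_cols :: "nat \<Rightarrow> bool" where
  "in_hole_cols x \<longleftrightarrow> (\<exists>i\<in>{1..r}. \<exists>j\<in>{1..s}. fst (a i j) < x \<and> x < fst (b i j))"

definition in_hole_rows :: "nat \<Rightarrow> bool" where
  "in_hole_rows y \<longleftrightarrow> (\<exists>i\<in>{1..r}. \<exists>j\<in>{1..s}. snd (a i j) < y \<and> y < snd (b i j))"

lemma cols_clear_commute: "cols_clear x x' = cols_clear x' x"
  unfolding cols_clear_def by (simp add: min.commute max.commute)

lemma rows_clear_commute: "rows_clear y y' = rows_clear y' y"
  unfolding rows_clear_def by (simp add: min.commute max.commute)

lemma inner_rectangle_if_clear: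
  assumes "p \<in> verts" "q \<in> verts" "fst p \<noteq> fst q" "snd p \<noteq> snd q"
    and "cols_clear (fst p) (fst q) \<or> rows_clear (snd p) (snd q)"
  shows "inner_rectangle cells p q"
  unfolding inner_rectangle_def inner_interval_def
proof (intro conjI allI impI)
  fix c assume c: "cell_in c (min (fst p) (fst q), min (snd p) (snd q)) (max (fst p) (fst q), max (snd p) (snd q))"
  then have "\<not> cell_in c (a i j) (b i j)" if "i \<in> {1..r}" "j \<in> {1..s}" for i j
    using assms(5) that unfolding cols_clear_def rows_clear_def cell_in_def by force
  then show "c \<in> cells"
    using c vertex_bounds[OF assms(1)] vertex_bounds[OF assms(2)] unfolding mem_cells_iff cell_in_def by auto
qed (use assms(3,4) in auto)

lemma cols_clear_if_h_edges:
  assumes "in_hole_rows y" "\<forall>t. min x x' \<le> t \<longrightarrow> t < max x x' \<longrightarrow> h_edge cells (t, y)"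
  shows "cols_clear x x'"
  unfolding cols_clear_def
proof (intro allI impI ballI notI)
  fix t i j assume t: "min x x' \<le> t" "t < max x x'" and ij: "i \<in> {1..r}" "j \<in> {1..s}"
    and col: "fst (a i j) \<le> t \<and> t < fst (b i j)"
  obtain i0 j0 where ij0: "i0 \<in> {1..r}" "j0 \<in> {1..s}" "snd (a i0 j0) < y" "y < snd (b i0 j0)"
    using assms(1) unfolding in_hole_rows_def by blast
  have "cell_in (t, y) (a i j0) (b i j0)" "cell_in (t, y - 1) (a i j0) (b i j0)"
    using col ij0 hole_columns_aligned[OF ij(1) ij0(2) ij(2)] hole_rows_aligned[OF ij0(2) ij(1) ij0(1)]
    unfolding cell_in_def by auto
  then show False
    using assms(2) t ij(1) ij0(2) unfolding h_edge_def mem_cells_iff by fastforce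
qed

lemma rows_clear_if_v_edges:
  assumes "in_hole_cols x" "\<forall>t. min y y' \<le> t \<longrightarrow> t < max y y' \<longrightarrow> v_edge cells (x, t)"
  shows "rows_clear y y'"
  unfolding rows_clear_def
proof (intro allI impI ballI notI)
  fix t i j assume t: "min y y' \<le> t" "t < max y y'" and ij: "i \<in> {1..r}" "j \<in> {1..s}"
    and row: "snd (a i j) \<le> t \<and> t < snd (b i j)"
  obtain i0 j0 where ij0: "i0 \<in> {1..r}" "j0 \<in> {1..s}" "fst (a i0 j0) < x" "x < fst (b i0 j0)"
    using assms(1) unfolding in_hole_cols_def by blast
  have "cell_in (x, t) (a i0 j) (b i0 j)" "cell_in (x - 1, t) (a i0 j) (b i0 j)"
    using row ij0 hole_rows_aligned[OF ij(2) ij0(1) ij(1)] hole_columns_aligned[OF ij0(1) ij(2) ij0(2)]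
    unfolding cell_in_def by auto
  then show False
    using assms(2) t ij0(1) ij(2) unfolding v_edge_def mem_cells_iff by fastforce
qed

definition reaches :: "pt multiset \<Rightarrow> pt \<Rightarrow> bool" where
  "reaches U u \<longleftrightarrow> (\<exists>U'. moves U U' \<and> u \<in># U')"

lemma reaches_mem: "u \<in># U \<Longrightarrow> reaches U u"
  unfolding reaches_def by (intro exI[of _ U]) simp

lemma reaches_trans: "moves U U' \<Longrightarrow> reaches U' u \<Longrightarrow> reaches U u"
  unfolding reaches_def by (metis equivclp_trans)

lemma reaches_corner:
  assumes U: "set_mset U \<subseteq> verts" and pq: "p \<in># U" "q \<in># U" "snd p = snd u" "fst q = fst u"
    and clear: "cols_clear (fst p) (fst q) \<or> rows_clear (snd p) (snd q)"
  shows "reaches U u"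
proof (cases "p = u \<or> q = u")
  case True
  then show ?thesis using pq reaches_mem by blast
next
  case False
  then have ne: "fst p \<noteq> fst q" "snd p \<noteq> snd q" using pq(3,4) by (auto simp: prod_eq_iff)
  obtain A where A: "U = add_mset p A" using pq(1) by (blast dest: multi_member_split)
  with pq(2) ne have "q \<in># A" by auto
  then obtain W where "A = add_mset q W" by (blast dest: multi_member_split)
  with A have W: "U = add_mset p (add_mset q W)" by simp
  have "inner_rectangle cells p q"
    using U pq(1,2) by (intro inner_rectangle_if_clear ne clear) auto
  then have "moves U (add_mset (fst p, snd q) (add_mset (fst q, snd p) W))"
    using equivclp_inner_swap_rectangle[OF ne] W U by simp
  moreover have "(fst q, snd p) = u" using pq(3,4) by (simp add: prod_eq_iff)
  ultimately show ?thesis unfolding reaches_def by auto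
qed

lemma reaches_in_hole_row:
  assumes U: "set_mset U \<subseteq> verts" and u: "u \<in> verts" "in_hole_rows (snd u)"
    and pq: "p \<in># U" "Hint cells p = Hint cells u" "q \<in># U" "Vint cells q = Vint cells u"
  shows "reaches U u"
proof -
  have row: "snd p = snd u" "\<forall>t. min (fst u) (fst p) \<le> t \<longrightarrow> t < max (fst u) (fst p) \<longrightarrow> h_edge cells (t, snd u)"
    using Hint_eq_iff[OF finite_cells u(1), of p] pq U by auto
  have col: "fst q = fst u" using Vint_eq_iff[OF finite_cells u(1), of q] pq U by auto
  have "cols_clear (fst p) (fst q)"
    using cols_clear_if_h_edges[OF u(2) row(2)] col cols_clear_commute by simp
  then show ?thesis using reaches_corner[OF U pq(1,3) row(1) col] by blast
qed

lemma reaches_in_hole_col: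
  assumes U: "set_mset U \<subseteq> verts" and u: "u \<in> verts" "in_hole_cols (fst u)"
    and pq: "p \<in># U" "Hint cells p = Hint cells u" "q \<in># U" "Vint cells q = Vint cells u"
  shows "reaches U u"
proof -
  have row: "snd p = snd u" using Hint_eq_iff[OF finite_cells u(1), of p] pq U by auto
  have col: "fst q = fst u" "\<forall>t. min (snd u) (snd q) \<le> t \<longrightarrow> t < max (snd u) (snd q) \<longrightarrow> v_edge cells (fst u, t)"
    using Vint_eq_iff[OF finite_cells u(1), of q] pq U by auto
  have "rows_clear (snd p) (snd q)"
    using rows_clear_if_v_edges[OF u(2) col(2)] row by simp
  then show ?thesis using reaches_corner[OF U pq(1,3) row col(1)] by blast
qed

lemma reaches_via_clear_point:
  assumes U: "set_mset U \<subseteq> verts"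
    and z: "z \<in># U" "cols_clear (fst z) (fst u)" "rows_clear (snd z) (snd u)"
    and p: "p \<in># U" "snd p = snd u" and q: "q \<in># U" "fst q = fst u"
  shows "reaches U u"
proof -
  consider "u \<in># U" | "snd z = snd u" | "fst z = fst u" | "fst p = fst z"
    | "u \<notin># U" "snd z \<noteq> snd u" "fst z \<noteq> fst u" "fst p \<noteq> fst z" by blast
  then show ?thesis
  proof cases
    case 1
    then show ?thesis by (rule reaches_mem)
  next
    case 2
    then show ?thesis using reaches_corner[OF U z(1) q(1) 2 q(2)] z(2) q(2) by simp
  next
    case 3
    then show ?thesis using reaches_corner[OF U p(1) z(1) p(2)] z(3) p(2) rows_clear_commute by simp
  next
    case 4
    then show ?thesis using reaches_corner[OF U p(1) q(1) p(2) q(2)] z(2) q(2) by simp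
  next
    case 5
    have ne: "fst z \<noteq> fst p" "snd z \<noteq> snd p" using 5 p(2) by auto
    have "p \<noteq> u" "q \<noteq> u" using 5 p(1) q(1) by auto
    then have "q \<noteq> z" "q \<noteq> p" using 5 p(2) q(2) by (auto simp: prod_eq_iff)
    obtain A where A: "U = add_mset z A" using z(1) by (blast dest: multi_member_split)
    with p(1) ne have "p \<in># A" by auto
    then obtain W where "A = add_mset p W" by (blast dest: multi_member_split)
    with A have W: "U = add_mset z (add_mset p W)" by simp
    with q(1) \<open>q \<noteq> z\<close> \<open>q \<noteq> p\<close> have "q \<in># W" by auto
    let ?U' = "add_mset (fst z, snd p) (add_mset (fst p, snd z) W)"
    have "inner_rectangle cells z p"
      using U z(1,3) p by (intro inner_rectangle_if_clear ne) auto
    then have moves: "moves U ?U'"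
      using equivclp_inner_swap_rectangle[OF ne] W U by simp
    moreover have "reaches ?U' u"
    proof (rule reaches_corner[of ?U' "(fst z, snd p)" q])
      show "set_mset ?U' \<subseteq> verts" using equivclp_inner_swap_vertices[OF moves U] .
    qed (use \<open>q \<in># W\<close> p(2) q(2) z(2) in simp_all)
    ultimately show ?thesis by (rule reaches_trans)
  qed
qed

lemma weight_eq_reaches:
  assumes eq: "weight U = weight U'" and verts: "set_mset U \<subseteq> verts" "set_mset U' \<subseteq> verts"
    and u: "u \<in># U'"
    and "in_hole_cols (fst u) \<or> in_hole_rows (snd u) \<or>
         (\<exists>z\<in>#U. cols_clear (fst z) (fst u) \<and> rows_clear (snd z) (snd u))"
  shows "reaches U u"
proof -
  have uV: "u \<in> verts" using u verts(2) by blast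
  obtain p q where pq: "p \<in># U" "Hint cells p = Hint cells u" "q \<in># U" "Vint cells q = Vint cells u"
    using weight_eq_partners[OF eq u] .
  from assms(5) consider "in_hole_cols (fst u)" | "in_hole_rows (snd u)"
    | z where "z \<in># U" "cols_clear (fst z) (fst u)" "rows_clear (snd z) (snd u)" by blast
  then show ?thesis
  proof cases
    case 1
    then show ?thesis by (rule reaches_in_hole_col[OF verts(1) uV _ pq])
  next
    case 2
    then show ?thesis by (rule reaches_in_hole_row[OF verts(1) uV _ pq])
  next
    case 3
    have "snd p = snd u" "fst q = fst u"
      using Hint_eq_iff[OF finite_cells uV, of p] Vint_eq_iff[OF finite_cells uV, of q] pq verts(1) by auto
    then show ?thesis by (rule reaches_via_clear_point[OF verts(1) 3 pq(1) _ pq(3)])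
  qed
qed

definition x_ceil :: "nat \<Rightarrow> nat" where
  "x_ceil x = (LEAST x0. x0 \<in> hole_xs \<and> x \<le> x0)"

definition y_ceil :: "nat \<Rightarrow> nat" where
  "y_ceil y = (LEAST y0. y0 \<in> hole_ys \<and> y \<le> y0)"

lemma x_ceil: "x \<le> m \<Longrightarrow> x_ceil x \<in> hole_xs \<and> x \<le> x_ceil x"
  unfolding x_ceil_def by (rule LeastI[of _ m]) (simp add: hole_xs_def)

lemma x_ceil_le: "x0 \<in> hole_xs \<Longrightarrow> x \<le> x0 \<Longrightarrow> x_ceil x \<le> x0"
  unfolding x_ceil_def by (rule Least_le) simp

lemma y_ceil: "y \<le> n \<Longrightarrow> y_ceil y \<in> hole_ys \<and> y \<le> y_ceil y"
  unfolding y_ceil_def by (rule LeastI[of _ n]) (simp add: hole_ys_def)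

lemma y_ceil_le: "y0 \<in> hole_ys \<Longrightarrow> y \<le> y0 \<Longrightarrow> y_ceil y \<le> y0"
  unfolding y_ceil_def by (rule Least_le) simp

lemma weight_eq_quadrant_empty:
  assumes "weight U = weight U'" "set_mset U \<subseteq> verts" "set_mset U' \<subseteq> verts" "x \<in> hole_xs" "y \<in> hole_ys"
    and "\<And>v. v \<in># U' \<Longrightarrow> \<not> (fst v \<le> x \<and> snd v \<le> y)" "z \<in># U"
  shows "\<not> (fst z \<le> x \<and> snd z \<le> y)"
proof -
  have "{#v \<in># U'. fst v \<le> x \<and> snd v \<le> y#} = {#}"
    using assms(6) by (simp only: filter_mset_eq_mempty_iff) blast
  then have "size {#v \<in># U. fst v \<le> x \<and> snd v \<le> y#} = 0"
    using weight_eq_quadrant[OF assms(1-5)] by simp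
  then have "\<forall>v. v \<in># U \<longrightarrow> \<not> (fst v \<le> x \<and> snd v \<le> y)"
    by (simp only: size_eq_0_iff_empty filter_mset_eq_mempty_iff)
  then show ?thesis using assms(7) by blast
qed

lemma lex_least_left:
  assumes eq: "weight U = weight U'" and verts: "set_mset U \<subseteq> verts" "set_mset U' \<subseteq> verts"
    and u: "u \<in># U'" "\<And>v. v \<in># U' \<Longrightarrow> (x_ceil (fst u), snd u) \<le> (x_ceil (fst v), snd v)"
    and z: "z \<in># U" "snd z \<le> y_ceil (snd u)" and x: "x \<in> hole_xs" "x < fst u"
  shows "x < fst z"
proof -
  have uV: "u \<in> verts" using u(1) verts(2) by blast
  have "\<not> (fst v \<le> x \<and> snd v \<le> y_ceil (snd u))" if "v \<in># U'" for v
  proof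
    assume "fst v \<le> x \<and> snd v \<le> y_ceil (snd u)"
    then have "x_ceil (fst v) < fst u" using x_ceil_le[OF x(1)] x(2) by (meson le_less_trans)
    moreover have "fst u \<le> x_ceil (fst u)" using x_ceil[OF vertex_bounds(2)[OF uV]] by blast
    moreover have "x_ceil (fst u) \<le> x_ceil (fst v)" using u(2)[OF that] by auto
    ultimately show False by simp
  qed
  moreover have "y_ceil (snd u) \<in> hole_ys" using y_ceil[OF vertex_bounds(4)[OF uV]] by blast
  ultimately have "\<not> (fst z \<le> x \<and> snd z \<le> y_ceil (snd u))"
    using weight_eq_quadrant_empty[OF eq verts x(1) _ _ z(1)] by blast
  then show ?thesis using z(2) by simp
qed

lemma lex_least_below:
  assumes eq: "weight U = weight U'" and verts: "set_mset U \<subseteq> verts" "set_mset U' \<subseteq> verts"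
    and u: "u \<in># U'" "\<And>v. v \<in># U' \<Longrightarrow> (x_ceil (fst u), snd u) \<le> (x_ceil (fst v), snd v)"
    and z: "z \<in># U" "fst z \<le> x_ceil (fst u)" and y: "y \<in> hole_ys" "y < snd u"
  shows "y < snd z"
proof -
  have uV: "u \<in> verts" using u(1) verts(2) by blast
  have ceil: "x_ceil (fst u) \<in> hole_xs" using x_ceil[OF vertex_bounds(2)[OF uV]] by blast
  have "\<not> (fst v \<le> x_ceil (fst u) \<and> snd v \<le> y)" if "v \<in># U'" for v
  proof
    assume v: "fst v \<le> x_ceil (fst u) \<and> snd v \<le> y"
    then have "x_ceil (fst v) \<le> x_ceil (fst u)" using x_ceil_le[OF ceil] by blast
    then have "snd u \<le> snd v" using u(2)[OF that] by auto
    then show False using v y(2) by simp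
  qed
  then have "\<not> (fst z \<le> x_ceil (fst u) \<and> snd z \<le> y)"
    using weight_eq_quadrant_empty[OF eq verts ceil y(1) _ z(1)] by blast
  then show ?thesis using z(2) by simp
qed

lemma cols_clear_if_separated:
  assumes "\<And>x. x \<in> hole_xs \<Longrightarrow> x < u \<Longrightarrow> x < z" "\<And>x. x \<in> hole_xs \<Longrightarrow> u \<le> x \<Longrightarrow> z \<le> x"
    and "\<not> in_hole_cols z" "\<not> in_hole_cols u"
  shows "cols_clear z u"
  unfolding cols_clear_def
proof (intro allI impI ballI)
  fix t i j assume t: "min z u \<le> t" "t < max z u" and ij: "i \<in> {1..r}" "j \<in> {1..s}"
  show "\<not> (fst (a i j) \<le> t \<and> t < fst (b i j))"
  proof (rule interval_not_between[where X = hole_xs, OF _ assms(1,2) _ _ t])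
    show "fst (a i j) \<in> hole_xs" using ij unfolding hole_xs_def by blast
    show "\<not> (fst (a i j) < z \<and> z < fst (b i j))" "\<not> (fst (a i j) < u \<and> u < fst (b i j))"
      using assms(3,4) ij unfolding in_hole_cols_def by auto
  qed
qed

lemma rows_clear_if_separated:
  assumes "\<And>y. y \<in> hole_ys \<Longrightarrow> y < u \<Longrightarrow> y < z" "\<And>y. y \<in> hole_ys \<Longrightarrow> u \<le> y \<Longrightarrow> z \<le> y"
    and "\<not> in_hole_rows z" "\<not> in_hole_rows u"
  shows "rows_clear z u"
  unfolding rows_clear_def
proof (intro allI impI ballI)
  fix t i j assume t: "min z u \<le> t" "t < max z u" and ij: "i \<in> {1..r}" "j \<in> {1..s}"
  show "\<not> (snd (a i j) \<le> t \<and> t < snd (b i j))"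
  proof (rule interval_not_between[where X = hole_ys, OF _ assms(1,2) _ _ t])
    show "snd (a i j) \<in> hole_ys" using ij unfolding hole_ys_def by blast
    show "\<not> (snd (a i j) < z \<and> z < snd (b i j))" "\<not> (snd (a i j) < u \<and> u < snd (b i j))"
      using assms(3,4) ij unfolding in_hole_rows_def by auto
  qed
qed

lemma exists_clear_point:
  assumes eq: "weight U = weight U'" and verts: "set_mset U \<subseteq> verts" "set_mset U' \<subseteq> verts"
    and u: "u \<in># U'" "\<And>v. v \<in># U' \<Longrightarrow> (x_ceil (fst u), snd u) \<le> (x_ceil (fst v), snd v)"
    and outside: "\<And>v. v \<in># U + U' \<Longrightarrow> \<not> in_hole_cols (fst v) \<and> \<not> in_hole_rows (snd v)"
  shows "\<exists>z\<in>#U. cols_clear (fst z) (fst u) \<and> rows_clear (snd z) (snd u)"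
proof -
  have uV: "u \<in> verts" using u(1) verts(2) by blast
  have ceil: "x_ceil (fst u) \<in> hole_xs" "fst u \<le> x_ceil (fst u)" "y_ceil (snd u) \<in> hole_ys" "snd u \<le> y_ceil (snd u)"
    using x_ceil[OF vertex_bounds(2)[OF uV]] y_ceil[OF vertex_bounds(4)[OF uV]] by blast+
  obtain z where z: "z \<in># U" "fst z \<le> x_ceil (fst u)" "snd z \<le> y_ceil (snd u)"
    using weight_eq_quadrant_empty[OF eq[symmetric] verts(2,1) ceil(1,3) _ u(1)] ceil(2,4) by blast
  have "cols_clear (fst z) (fst u)"
  proof (rule cols_clear_if_separated)
    show "x < fst z" if "x \<in> hole_xs" "x < fst u" for x
      using lex_least_left[OF eq verts u z(1,3) that] .
    show "fst z \<le> x" if "x \<in> hole_xs" "fst u \<le> x" for x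
      using x_ceil_le[OF that] z(2) by simp
  qed (use outside z(1) u(1) in auto)
  moreover have "rows_clear (snd z) (snd u)"
  proof (rule rows_clear_if_separated)
    show "y < snd z" if "y \<in> hole_ys" "y < snd u" for y
      using lex_least_below[OF eq verts u z(1,2) that] .
    show "snd z \<le> y" if "y \<in> hole_ys" "snd u \<le> y" for y
      using y_ceil_le[OF that] z(3) by simp
  qed (use outside z(1) u(1) in auto)
  ultimately show ?thesis using z(1) by blast
qed

lemma weight_eq_common_point:
  assumes eq: "weight U = weight U'" and verts: "set_mset U \<subseteq> verts" "set_mset U' \<subseteq> verts"
    and "U' \<noteq> {#}"
  shows "\<exists>u. reaches U u \<and> reaches U' u"
proof -
  consider (in_U') u where "u \<in># U'" "in_hole_cols (fst u) \<or> in_hole_rows (snd u)"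
    | (in_U) u where "u \<in># U" "in_hole_cols (fst u) \<or> in_hole_rows (snd u)"
    | (outside) "\<And>v. v \<in># U + U' \<Longrightarrow> \<not> in_hole_cols (fst v) \<and> \<not> in_hole_rows (snd v)"
    by (metis union_iff)
  then show ?thesis
  proof cases
    case (in_U' u)
    then show ?thesis using weight_eq_reaches[OF eq verts in_U'(1)] reaches_mem by blast
  next
    case (in_U u)
    then show ?thesis using weight_eq_reaches[OF eq[symmetric] verts(2,1) in_U(1)] reaches_mem by blast
  next
    case outside
    obtain u where u: "u \<in># U'" "\<And>v. v \<in># U' \<Longrightarrow> (x_ceil (fst u), snd u) \<le> (x_ceil (fst v), snd v)"
      using mset_has_least[OF assms(4), of "\<lambda>v. (x_ceil (fst v), snd v)"] by blast
    have "\<exists>z\<in>#U. cols_clear (fst z) (fst u) \<and> rows_clear (snd z) (snd u)"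
      by (rule exists_clear_point[OF eq verts u outside])
    then have "reaches U u" using weight_eq_reaches[OF eq verts u(1)] by blast
    then show ?thesis using reaches_mem[OF u(1)] by blast
  qed
qed

lemma weight_eq_size:
  "weight U = weight U' \<Longrightarrow> set_mset U \<subseteq> verts \<Longrightarrow> set_mset U' \<subseteq> verts \<Longrightarrow> size U = size U'"
  by (metis weight_eq_image_snd size_image_mset)

lemma weight_eq_moves:
  "weight U = weight U' \<Longrightarrow> set_mset U \<subseteq> verts \<Longrightarrow> set_mset U' \<subseteq> verts \<Longrightarrow> moves U U'"
proof (induction "size U" arbitrary: U U')
  case 0
  then have "U = {#}" "U' = {#}" using weight_eq_size[of U U'] by auto
  then show ?case by simp
next
  case (Suc k)
  have "U' \<noteq> {#}" using Suc.hyps(2) weight_eq_size[OF Suc.prems] by auto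
  then obtain u where "reaches U u" "reaches U' u" using weight_eq_common_point[OF Suc.prems] by blast
  then obtain U1 U1' where U1: "moves U U1" "u \<in># U1" and U1': "moves U' U1'" "u \<in># U1'"
    unfolding reaches_def by blast
  obtain R R' where R: "U1 = add_mset u R" "U1' = add_mset u R'"
    using U1(2) U1'(2) by (blast dest: multi_member_split)
  have verts: "set_mset U1 \<subseteq> verts" "set_mset U1' \<subseteq> verts"
    using equivclp_inner_swap_vertices U1(1) U1'(1) Suc.prems(2,3) by blast+
  have weights: "weight U1 = weight U" "weight U1' = weight U'"
    using moves_weight[OF U1(1)] moves_weight[OF U1'(1)] by simp_all
  then have "phi_exponent cells r s a u + weight R = phi_exponent cells r s a u + weight R'"
    using R Suc.prems(1) by simp
  then have "weight R = weight R'" by simp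
  moreover have "size R = k"
    using Suc.hyps(2) weight_eq_size[OF weights(1) verts(1) Suc.prems(2)] R(1) by simp
  ultimately have "moves R R'" using Suc.hyps(1) verts R by simp
  then have "moves U1 U1'" using R equivclp_inner_swap_add_mset verts(1) by simp
  then show ?case using U1(1) U1'(1) by (meson equivclp_sym equivclp_trans)
qed

lemma phi_var_eq: "(phi_var cells r s a :: pt \<Rightarrow> (tvar, 'k::comm_ring_1) mpoly) =
                   (\<lambda>v. Poly_Mapping.single (phi_exponent cells r s a v) 1)"
  by (rule ext) (rule phi_var_eq_single)

lemma polyomino_ideal_subset_toric_ideal:
  "(polyomino_ideal cells :: (pt, 'k::comm_ring_1) mpoly set) \<subseteq> toric_ideal cells r s a"
proof
  fix p :: "(pt, 'k) mpoly" assume p: "p \<in> polyomino_ideal cells"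
  let ?G = "{Var A * Var B - Var (fst A, snd B) * Var (fst B, snd A) |A B. inner_interval cells A B}
            :: (pt, 'k) mpoly set"
  have binomial: "\<exists>A B. g = Var A * Var B - Var (fst A, snd B) * Var (fst B, snd A) \<and> inner_interval cells A B"
    if "g \<in> ?G" for g
    using that by blast
  have "?G \<subseteq> poly_ring verts"
  proof
    fix g :: "(pt, 'k) mpoly" assume "g \<in> ?G"
    with binomial obtain A B where "g = Var A * Var B - Var (fst A, snd B) * Var (fst B, snd A)"
      "inner_interval cells A B" by blast
    then show "g \<in> poly_ring verts"
      by (simp add: poly_ring_diff poly_ring_mult poly_ring_Var inner_interval_vertices)
  qed
  then have "p \<in> poly_ring verts"
    using p ideal_gen_subset_poly_ring unfolding polyomino_ideal_def by blast
  moreover have "subst_hom (\<lambda>v. Poly_Mapping.single (phi_exponent cells r s a v) 1) p = 0"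
  proof (rule binomial_ideal_in_kernel)
    show "p \<in> ideal_gen (poly_ring verts) ?G" using p unfolding polyomino_ideal_def .
    show "\<exists>U U'. g = mset_monom U - mset_monom U' \<and> weight U = weight U'" if g: "g \<in> ?G" for g
    proof -
      obtain A B where AB: "g = Var A * Var B - Var (fst A, snd B) * Var (fst B, snd A)"
        "inner_interval cells A B" using binomial[OF g] by blast
      then have "g = mset_monom {#A, B#} - mset_monom {#(fst A, snd B), (fst B, snd A)#}"
        by (simp only: mset_monom_pair)
      with inner_interval_weight[OF AB(2)] show ?thesis by blast
    qed
  qed
  ultimately show "p \<in> toric_ideal cells r s a"
    unfolding toric_ideal_def phi_var_eq by blast
qed

lemma toric_ideal_subset_polyomino_ideal:
  "toric_ideal cells r s a \<subseteq> (polyomino_ideal cells :: (pt, 'k::comm_ring_1) mpoly set)"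
proof
  fix p :: "(pt, 'k) mpoly" assume "p \<in> toric_ideal cells r s a"
  then have p: "p \<in> poly_ring verts"
    and kernel: "subst_hom (\<lambda>v. Poly_Mapping.single (phi_exponent cells r s a v) 1) p = 0"
    unfolding toric_ideal_def phi_var_eq by simp_all
  show "p \<in> polyomino_ideal cells"
    unfolding polyomino_ideal_def
  proof (rule kernel_in_binomial_ideal[OF _ p kernel])
    fix U U' assume "set_mset U \<subseteq> verts" "set_mset U' \<subseteq> verts" "weight U = weight U'"
    then have "moves U U'" by (simp add: weight_eq_moves)
    then show "mset_monom U - mset_monom U' \<in> ideal_gen (poly_ring verts)
      {Var A * Var B - Var (fst A, snd B) * Var (fst B, snd A) |A B. inner_interval cells A B}"
      using equivclp_inner_swap_in_polyomino_ideal unfolding polyomino_ideal_def by blast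
  qed
qed

end

theorem theorem4p4:
  fixes m n r s :: nat and a b :: "nat \<Rightarrow> nat \<Rightarrow> nat \<times> nat"
  assumes "grid_data m n r s a b"
  shows "(polyomino_ideal (grid_polyomino m n r s a b) :: (pt, 'k::field) mpoly set)
           = toric_ideal (grid_polyomino m n r s a b) r s a"
proof -
  interpret grid m n r s a b by (rule grid.intro) (rule assms)
  show ?thesis using polyomino_ideal_subset_toric_ideal toric_ideal_subset_polyomino_ideal by blast
qed

end
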